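(* The class of models of $\mathbb{R}\mathsf{FR}$ has the joint embedding property and the amalgamation property.
   Context: An $\mathbb{R}$-forest is a complete extended ($[0,\infty]$-valued) metric space such that each set $\{y:d(x,y)<\infty\}$ is an $\mathbb{R}$-tree (uniquely arc-connected complete metric space with arcs isometric to real intervals). A function $f:X^2\to[0,1]$ is $1$-$1$-Lipschitz if $x\mapsto f(a,x)$ and $x\mapsto f(x,a)$ are $1$-Lipschitz for every $a\in X$. $\mathbb{R}\mathsf{FR}$ is the theory in the language consisting of an extended metric and a $[0,1]$-valued binary predicate $R$ saying that the underlying metric space is an $\mathbb{R}$-forest and $R$ is $1$-$1$-Lipschitz. The empty structure is allowed as a model. *)

theory Defs
  imports "HOL-Analysis.Analysis" "HOL-Library.Extended_Nonnegative_Real"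
begin

text \<open>Values of d and R outside S are irrelevant.\<close>

definition ext_metric :: "'a set \<Rightarrow> ('a \<Rightarrow> 'a \<Rightarrow> ennreal) \<Rightarrow> bool" where
  "ext_metric S d \<longleftrightarrow>
     (\<forall>x\<in>S. \<forall>y\<in>S. d x y = 0 \<longleftrightarrow> x = y) \<and>
     (\<forall>x\<in>S. \<forall>y\<in>S. d x y = d y x) \<and>
     (\<forall>x\<in>S. \<forall>y\<in>S. \<forall>z\<in>S. d x z \<le> d x y + d y z)"

definition ext_cauchy :: "('a \<Rightarrow> 'a \<Rightarrow> ennreal) \<Rightarrow> (nat \<Rightarrow> 'a) \<Rightarrow> bool" where
  "ext_cauchy d s \<longleftrightarrow>
     (\<forall>e::real. e > 0 \<longrightarrow> (\<exists>N. \<forall>m\<ge>N. \<forall>n\<ge>N. d (s m) (s n) < ennreal e))"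

definition ext_converges_to :: "('a \<Rightarrow> 'a \<Rightarrow> ennreal) \<Rightarrow> (nat \<Rightarrow> 'a) \<Rightarrow> 'a \<Rightarrow> bool" where
  "ext_converges_to d s x \<longleftrightarrow>
     (\<forall>e::real. e > 0 \<longrightarrow> (\<exists>N. \<forall>n\<ge>N. d (s n) x < ennreal e))"

definition ext_complete :: "'a set \<Rightarrow> ('a \<Rightarrow> 'a \<Rightarrow> ennreal) \<Rightarrow> bool" where
  "ext_complete S d \<longleftrightarrow>
     (\<forall>s. (\<forall>n. s n \<in> S) \<and> ext_cauchy d s \<longrightarrow> (\<exists>x\<in>S. ext_converges_to d s x))"

definition path_cont_on :: "real set \<Rightarrow> ('a \<Rightarrow> 'a \<Rightarrow> ennreal) \<Rightarrow> (real \<Rightarrow> 'a) \<Rightarrow> bool" where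
  "path_cont_on I d g \<longleftrightarrow>
     (\<forall>t\<in>I. \<forall>e::real. e > 0 \<longrightarrow>
        (\<exists>\<delta>>0. \<forall>s\<in>I. \<bar>s - t\<bar> < \<delta> \<longrightarrow> d (g s) (g t) < ennreal e))"

text \<open>A is an arc in T from x to y: the image of a topological embedding
  of a compact real interval [a,b] (a = b allowed, giving the degenerate arc {x}).
  Since [a,b] is compact, a continuous injection from it is a topological embedding.\<close>
definition arc_between :: "'a set \<Rightarrow> ('a \<Rightarrow> 'a \<Rightarrow> ennreal) \<Rightarrow> 'a \<Rightarrow> 'a \<Rightarrow> 'a set \<Rightarrow> bool" where
  "arc_between T d x y A \<longleftrightarrow>
     (\<exists>a b (g :: real \<Rightarrow> 'a). a \<le> b \<and> g ` {a..b} = A \<and> A \<subseteq> T \<and>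
        inj_on g {a..b} \<and> path_cont_on {a..b} d g \<and> g a = x \<and> g b = y)"

definition r_tree :: "'a set \<Rightarrow> ('a \<Rightarrow> 'a \<Rightarrow> ennreal) \<Rightarrow> bool" where
  "r_tree T d \<longleftrightarrow>
     ext_metric T d \<and> (\<forall>x\<in>T. \<forall>y\<in>T. d x y < \<infinity>) \<and> ext_complete T d \<and>
     (\<forall>x\<in>T. \<forall>y\<in>T. \<exists>!A. arc_between T d x y A) \<and>
     (\<forall>x\<in>T. \<forall>y\<in>T. \<forall>A. arc_between T d x y A \<longrightarrow>
        (\<exists>L::real. \<exists>\<phi>. L \<ge> 0 \<and> \<phi> ` {0..L} = A \<and>
           (\<forall>s\<in>{0..L}. \<forall>t\<in>{0..L}. d (\<phi> s) (\<phi> t) = ennreal \<bar>s - t\<bar>)))"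

definition r_forest :: "'a set \<Rightarrow> ('a \<Rightarrow> 'a \<Rightarrow> ennreal) \<Rightarrow> bool" where
  "r_forest S d \<longleftrightarrow>
     ext_metric S d \<and> ext_complete S d \<and>
     (\<forall>x\<in>S. r_tree {y\<in>S. d x y < \<infinity>} d)"

definition lip_1_1 :: "'a set \<Rightarrow> ('a \<Rightarrow> 'a \<Rightarrow> ennreal) \<Rightarrow> ('a \<Rightarrow> 'a \<Rightarrow> real) \<Rightarrow> bool" where
  "lip_1_1 S d R \<longleftrightarrow>
     (\<forall>x\<in>S. \<forall>y\<in>S. 0 \<le> R x y \<and> R x y \<le> 1) \<and>
     (\<forall>a\<in>S. \<forall>x\<in>S. \<forall>y\<in>S. ennreal \<bar>R a x - R a y\<bar> \<le> d x y) \<and>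
     (\<forall>a\<in>S. \<forall>x\<in>S. \<forall>y\<in>S. ennreal \<bar>R x a - R y a\<bar> \<le> d x y)"

definition RFR_model :: "'a set \<Rightarrow> ('a \<Rightarrow> 'a \<Rightarrow> ennreal) \<Rightarrow> ('a \<Rightarrow> 'a \<Rightarrow> real) \<Rightarrow> bool" where
  "RFR_model S d R \<longleftrightarrow> r_forest S d \<and> lip_1_1 S d R"

definition struct_embedding ::
  "'a set \<Rightarrow> ('a \<Rightarrow> 'a \<Rightarrow> ennreal) \<Rightarrow> ('a \<Rightarrow> 'a \<Rightarrow> real) \<Rightarrow>
   'b set \<Rightarrow> ('b \<Rightarrow> 'b \<Rightarrow> ennreal) \<Rightarrow> ('b \<Rightarrow> 'b \<Rightarrow> real) \<Rightarrow> ('a \<Rightarrow> 'b) \<Rightarrow> bool" where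
  "struct_embedding S1 d1 R1 S2 d2 R2 f \<longleftrightarrow>
     f ` S1 \<subseteq> S2 \<and>
     (\<forall>x\<in>S1. \<forall>y\<in>S1. d2 (f x) (f y) = d1 x y \<and> R2 (f x) (f y) = R1 x y)"

end

theory Submission
  imports Defs
begin

text \<open>
  To amalgamate B and C over A, take the disjoint union B + C modulo f a \<sim> g a, keep the
  metrics of B and C on the two sides, and let the distance from b to c be the infimum over a of
  dB b (f a) + dC (g a) c. Two R-forests glued along a common complete subforest form an
  R-forest: the common part is closed and convex in every R-tree component of either side, so an
  arc between two points of B never leaves B, and an arc from a point x of C - B to a point of B
  is the arc in C from x to its gate, the first point of B \<inter> C on the way, followed by an arc
  in B. The predicate is known on B \<times> B and C \<times> C, where it is 1-1-Lipschitz because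
  distances between the two sides factor through A; its McShane extension, truncated at 1, is
  1-1-Lipschitz on the amalgam and extends it. Joint embedding is amalgamation over the empty
  model.
\<close>

section \<open>Extended metric spaces\<close>

lemma INF_ennreal_add_const_on:
  fixes c :: ennreal
  shows "(INF a\<in>A. G a + c) = (INF a\<in>A. G a) + c"
proof (cases "A = {}")
  case False
  then show ?thesis
    using continuous_at_Inf_mono[of "\<lambda>x. x + c" "G ` A"]
      continuous_add[of "at_right (Inf (G ` A))" "\<lambda>x. x" "\<lambda>x. c"]
    by (auto simp: mono_def image_comp)
qed simp

lemma INF_ennreal_const_add_on:
  fixes c :: ennreal
  shows "(INF a\<in>A. c + G a) = c + (INF a\<in>A. G a)"
  using INF_ennreal_add_const_on[of G c A] by (simp add: add.commute)

lemma le_INF_add_INF: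
  fixes z :: ennreal
  assumes "\<And>a b. a \<in> A \<Longrightarrow> b \<in> A' \<Longrightarrow> z \<le> X a + Y b"
  shows "z \<le> (INF a\<in>A. X a) + (INF b\<in>A'. Y b)"
proof -
  have "z \<le> (INF a\<in>A. INF b\<in>A'. X a + Y b)" using assms by (blast intro: INF_greatest)
  then show ?thesis by (simp only: INF_ennreal_const_add_on INF_ennreal_add_const_on)
qed

lemma ext_metric_refl: "ext_metric S d \<Longrightarrow> x \<in> S \<Longrightarrow> d x x = 0"
  unfolding ext_metric_def by blast

lemma ext_metric_eq_0: "ext_metric S d \<Longrightarrow> x \<in> S \<Longrightarrow> y \<in> S \<Longrightarrow> d x y = 0 \<Longrightarrow> x = y"
  unfolding ext_metric_def by blast

lemma ext_metric_sym: "ext_metric S d \<Longrightarrow> x \<in> S \<Longrightarrow> y \<in> S \<Longrightarrow> d x y = d y x"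
  unfolding ext_metric_def by blast

lemma ext_metric_triangle:
  "ext_metric S d \<Longrightarrow> x \<in> S \<Longrightarrow> y \<in> S \<Longrightarrow> z \<in> S \<Longrightarrow> d x z \<le> d x y + d y z"
  unfolding ext_metric_def by blast

lemma ext_metric_subset: "ext_metric S d \<Longrightarrow> S' \<subseteq> S \<Longrightarrow> ext_metric S' d"
  unfolding ext_metric_def by (meson subsetD)

lemma ext_metric_finite_trans:
  assumes "ext_metric S d" "x \<in> S" "y \<in> S" "z \<in> S" "d x y < \<infinity>" "d y z < \<infinity>"
  shows "d x z < \<infinity>"
proof -
  have "d x y + d y z < \<infinity>" using assms(5,6) by (simp add: ennreal_add_less_top)
  then show ?thesis using ext_metric_triangle[OF assms(1-4)] by (rule le_less_trans[rotated])
qed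

definition finite_component :: "'a set \<Rightarrow> ('a \<Rightarrow> 'a \<Rightarrow> ennreal) \<Rightarrow> 'a \<Rightarrow> 'a set" where
  "finite_component S d x = {y\<in>S. d x y < \<infinity>}"

lemma finite_component_subset: "finite_component S d x \<subseteq> S"
  unfolding finite_component_def by blast

lemma finite_component_mono: "S \<subseteq> S' \<Longrightarrow> finite_component S d x \<subseteq> finite_component S' d x"
  unfolding finite_component_def by blast

lemma self_in_finite_component: "ext_metric S d \<Longrightarrow> x \<in> S \<Longrightarrow> x \<in> finite_component S d x"
  unfolding finite_component_def by (simp add: ext_metric_refl)

lemma finite_component_dist_finite:
  assumes "ext_metric S d" "x \<in> S" "u \<in> finite_component S d x" "v \<in> finite_component S d x"
  shows "d u v < \<infinity>"
proof -
  have "u \<in> S" "v \<in> S" "d u x < \<infinity>" "d x v < \<infinity>"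
    using assms ext_metric_sym[OF assms(1,2)] unfolding finite_component_def by auto
  then show ?thesis using ext_metric_finite_trans[OF assms(1) _ assms(2)] by blast
qed

lemma finite_component_eq:
  assumes "ext_metric S d" "x \<in> S" "y \<in> finite_component S d x"
  shows "finite_component S d y = finite_component S d x"
proof -
  have y: "y \<in> S" "d x y < \<infinity>" using assms(3) unfolding finite_component_def by auto
  have yx: "d y x < \<infinity>"
    using finite_component_dist_finite[OF assms(1,2,3) self_in_finite_component[OF assms(1,2)]] .
  have "d y w < \<infinity> \<longleftrightarrow> d x w < \<infinity>" if "w \<in> S" for w
    using ext_metric_finite_trans[OF assms(1) y(1) assms(2) that yx]
      ext_metric_finite_trans[OF assms(1) assms(2) y(1) that y(2)] by blast
  then show ?thesis unfolding finite_component_def by blast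
qed

lemma r_forest_ext_metric: "r_forest S d \<Longrightarrow> ext_metric S d"
  unfolding r_forest_def by blast

lemma r_forest_complete: "r_forest S d \<Longrightarrow> ext_complete S d"
  unfolding r_forest_def by blast

lemma r_forest_component: "r_forest S d \<Longrightarrow> x \<in> S \<Longrightarrow> r_tree (finite_component S d x) d"
  unfolding r_forest_def finite_component_def by (elim conjE) (rule bspec)

section \<open>Arcs\<close>

definition isometric_on :: "real set \<Rightarrow> ('a \<Rightarrow> 'a \<Rightarrow> ennreal) \<Rightarrow> (real \<Rightarrow> 'a) \<Rightarrow> bool" where
  "isometric_on I d g \<longleftrightarrow> (\<forall>s\<in>I. \<forall>t\<in>I. d (g s) (g t) = ennreal \<bar>s - t\<bar>)"

definition nonexpansive_on :: "real set \<Rightarrow> ('a \<Rightarrow> 'a \<Rightarrow> ennreal) \<Rightarrow> (real \<Rightarrow> 'a) \<Rightarrow> bool" where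
  "nonexpansive_on I d g \<longleftrightarrow> (\<forall>s\<in>I. \<forall>t\<in>I. d (g s) (g t) \<le> ennreal \<bar>s - t\<bar>)"

definition isometric_segment :: "('a \<Rightarrow> 'a \<Rightarrow> ennreal) \<Rightarrow> 'a set \<Rightarrow> bool" where
  "isometric_segment d G \<longleftrightarrow> (\<exists>L \<phi>. 0 \<le> L \<and> \<phi> ` {0..L} = G \<and> isometric_on {0..L} d \<phi>)"

lemma isometric_onD: "isometric_on I d g \<Longrightarrow> s \<in> I \<Longrightarrow> t \<in> I \<Longrightarrow> d (g s) (g t) = ennreal \<bar>s - t\<bar>"
  unfolding isometric_on_def by blast

lemma isometric_on_imp_nonexpansive_on: "isometric_on I d g \<Longrightarrow> nonexpansive_on I d g"
  unfolding isometric_on_def nonexpansive_on_def by simp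

lemma nonexpansive_on_imp_path_cont_on: "nonexpansive_on I d g \<Longrightarrow> path_cont_on I d g"
  unfolding nonexpansive_on_def path_cont_on_def
proof (intro ballI allI impI)
  fix t e assume L: "\<forall>s\<in>I. \<forall>t\<in>I. d (g s) (g t) \<le> ennreal \<bar>s - t\<bar>" and t: "t \<in> I"
    and e: "(0::real) < e"
  have "d (g s) (g t) < ennreal e" if "s \<in> I" "\<bar>s - t\<bar> < e" for s
  proof -
    have "d (g s) (g t) \<le> ennreal \<bar>s - t\<bar>" using L t that(1) by blast
    also have "\<dots> < ennreal e" using that(2) e by (simp add: ennreal_lessI)
    finally show ?thesis .
  qed
  then show "\<exists>\<delta>>0. \<forall>s\<in>I. \<bar>s - t\<bar> < \<delta> \<longrightarrow> d (g s) (g t) < ennreal e"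
    using e by blast
qed

lemma path_cont_on_subset: "path_cont_on I d g \<Longrightarrow> J \<subseteq> I \<Longrightarrow> path_cont_on J d g"
  unfolding path_cont_on_def by (meson subsetD)

lemma isometric_on_inj_on:
  assumes "ext_metric S d" "g ` I \<subseteq> S" "isometric_on I d g"
  shows "inj_on g I"
proof (rule inj_onI)
  fix s t assume st: "s \<in> I" "t \<in> I" "g s = g t"
  have "g s \<in> S" using assms(2) st(1) by blast
  then have "d (g s) (g t) = 0" using ext_metric_refl[OF assms(1)] st(3) by simp
  then have "ennreal \<bar>s - t\<bar> = 0" using isometric_onD[OF assms(3) st(1,2)] by simp
  then show "s = t" by simp
qed

lemma arc_betweenE:
  assumes "arc_between T d x y G"
  obtains a b g where "a \<le> b" "g ` {a..b} = G" "G \<subseteq> T" "inj_on g {a..b}"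
    "path_cont_on {a..b} d g" "g a = x" "g b = y"
  using assms unfolding arc_between_def by (elim exE conjE) (rule that)

lemma arc_betweenD:
  assumes "arc_between T d x y G"
  shows "x \<in> G" "y \<in> G" "G \<subseteq> T"
  using assms unfolding arc_between_def by force+

lemma arc_between_mono:
  assumes "arc_between T d x y G" "G \<subseteq> T'"
  shows "arc_between T' d x y G"
proof -
  obtain a b g where "a \<le> b" "g ` {a..b} = G" "G \<subseteq> T" "inj_on g {a..b}"
    "path_cont_on {a..b} d g" "g a = x" "g b = y"
    by (rule arc_betweenE[OF assms(1)])
  then show ?thesis unfolding arc_between_def using assms(2) by blast
qed

lemma arc_between_subpath:
  assumes "path_cont_on {a..b} d g" "inj_on g {a..b}" "a \<le> s" "s \<le> t" "t \<le> b"
    and "g ` {s..t} \<subseteq> T"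
  shows "arc_between T d (g s) (g t) (g ` {s..t})"
proof -
  have "{s..t} \<subseteq> {a..b}" using assms(3,5) by auto
  then have "path_cont_on {s..t} d g" "inj_on g {s..t}"
    using path_cont_on_subset[OF assms(1)] inj_on_subset[OF assms(2)] by blast+
  then show ?thesis unfolding arc_between_def using assms(4,6) by blast
qed

lemma arc_between_nonexpansive:
  assumes "a \<le> b" "nonexpansive_on {a..b} d g" "inj_on g {a..b}" "g ` {a..b} \<subseteq> T"
  shows "arc_between T d (g a) (g b) (g ` {a..b})"
  using arc_between_subpath[OF nonexpansive_on_imp_path_cont_on[OF assms(2)] assms(3) order_refl
      assms(1) order_refl assms(4)] .

lemma arc_between_isometric:
  assumes "ext_metric T d" "isometric_on {a..b} d g" "g ` {a..b} \<subseteq> T"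
    and "a \<le> s" "s \<le> t" "t \<le> b"
  shows "arc_between T d (g s) (g t) (g ` {s..t})"
proof (rule arc_between_subpath[OF _ _ assms(4-6)])
  show "path_cont_on {a..b} d g"
    by (rule nonexpansive_on_imp_path_cont_on[OF isometric_on_imp_nonexpansive_on[OF assms(2)]])
  show "inj_on g {a..b}" by (rule isometric_on_inj_on[OF assms(1,3,2)])
  show "g ` {s..t} \<subseteq> T" using assms(3-6) by auto
qed

definition join_path :: "real \<Rightarrow> (real \<Rightarrow> 'a) \<Rightarrow> (real \<Rightarrow> 'a) \<Rightarrow> real \<Rightarrow> 'a" where
  "join_path D p q t = (if t \<le> D then p t else q (t - D))"

lemma join_path_start: "0 \<le> D \<Longrightarrow> join_path D p q 0 = p 0"
  by (simp add: join_path_def)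

lemma join_path_end: "0 \<le> D' \<Longrightarrow> p D = q 0 \<Longrightarrow> join_path D p q (D + D') = q D'"
  by (auto simp: join_path_def)

lemma join_path_image:
  assumes "0 \<le> D" "0 \<le> D'" "p D = q 0"
  shows "join_path D p q ` {0..D + D'} = p ` {0..D} \<union> q ` {0..D'}"
proof (intro equalityI subsetI)
  fix z assume "z \<in> join_path D p q ` {0..D + D'}"
  then obtain t where "t \<in> {0..D + D'}" "z = join_path D p q t" by blast
  then show "z \<in> p ` {0..D} \<union> q ` {0..D'}"
    by (cases "t \<le> D") (auto simp: join_path_def)
next
  fix z assume "z \<in> p ` {0..D} \<union> q ` {0..D'}"
  then consider s where "s \<in> {0..D}" "z = p s" | s where "s \<in> {0..D'}" "z = q s" by blast
  then show "z \<in> join_path D p q ` {0..D + D'}"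
  proof cases
    case (1 s)
    then show ?thesis using assms by (intro image_eqI[of _ _ s]) (auto simp: join_path_def)
  next
    case (2 s)
    then show ?thesis using assms
      by (intro image_eqI[of _ _ "s + D"]) (auto simp: join_path_def)
  qed
qed

lemma join_path_dist_rel:
  assumes "0 \<le> D" "isometric_on {0..D} d p" "isometric_on {0..D'} d q"
    and "\<And>x. rel x x"
    and "\<And>s t. s \<in> {0..D} \<Longrightarrow> t \<in> {0..D'} \<Longrightarrow> rel (d (p s) (q t)) (ennreal (D - s + t))"
    and "\<And>s t. s \<in> {0..D} \<Longrightarrow> t \<in> {0..D'} \<Longrightarrow> rel (d (q t) (p s)) (ennreal (D - s + t))"
    and "s \<in> {0..D + D'}" "t \<in> {0..D + D'}"
  shows "rel (d (join_path D p q s) (join_path D p q t)) (ennreal \<bar>s - t\<bar>)"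
proof (cases "s \<le> D"; cases "t \<le> D")
  assume "s \<le> D" "t \<le> D"
  then show ?thesis using assms(2,4,7,8) unfolding isometric_on_def join_path_def by simp
next
  assume "\<not> s \<le> D" "\<not> t \<le> D"
  then have "d (q (s - D)) (q (t - D)) = ennreal \<bar>(s - D) - (t - D)\<bar>"
    using assms(3,7,8) unfolding isometric_on_def by auto
  then show ?thesis using \<open>\<not> s \<le> D\<close> \<open>\<not> t \<le> D\<close> assms(4) unfolding join_path_def by simp
next
  assume st: "s \<le> D" "\<not> t \<le> D"
  then have "rel (d (p s) (q (t - D))) (ennreal (D - s + (t - D)))"
    using assms(7,8) by (intro assms(5)) auto
  moreover have "D - s + (t - D) = \<bar>s - t\<bar>" using st by auto
  ultimately show ?thesis using st unfolding join_path_def by simp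
next
  assume st: "\<not> s \<le> D" "t \<le> D"
  then have "rel (d (q (s - D)) (p t)) (ennreal (D - t + (s - D)))"
    using assms(7,8) by (intro assms(6)) auto
  moreover have "D - t + (s - D) = \<bar>s - t\<bar>" using st by auto
  ultimately show ?thesis using st unfolding join_path_def by simp
qed

lemma isometric_on_join_path:
  assumes S: "ext_metric S d" "p ` {0..D} \<subseteq> S" "q ` {0..D'} \<subseteq> S"
    and "0 \<le> D" "isometric_on {0..D} d p" "isometric_on {0..D'} d q"
    and pq: "\<And>s t. s \<in> {0..D} \<Longrightarrow> t \<in> {0..D'} \<Longrightarrow> d (p s) (q t) = ennreal (D - s + t)"
  shows "isometric_on {0..D + D'} d (join_path D p q)"
proof -
  have qp: "d (q t) (p s) = ennreal (D - s + t)" if "s \<in> {0..D}" "t \<in> {0..D'}" for s t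
  proof -
    have "p s \<in> S" "q t \<in> S" using S(2,3) that by auto
    then show ?thesis using pq[OF that] ext_metric_sym[OF S(1)] by metis
  qed
  show ?thesis unfolding isometric_on_def
    using join_path_dist_rel[where rel = "(=)", OF assms(4-6) refl pq qp] by blast
qed

lemma nonexpansive_on_join_path:
  assumes S: "ext_metric S d" "p ` {0..D} \<subseteq> S" "q ` {0..D'} \<subseteq> S"
    and "0 \<le> D" "0 \<le> D'" "isometric_on {0..D} d p" "isometric_on {0..D'} d q" "p D = q 0"
  shows "nonexpansive_on {0..D + D'} d (join_path D p q)"
proof -
  have pq: "d (p s) (q t) \<le> ennreal (D - s + t)" if st: "s \<in> {0..D}" "t \<in> {0..D'}" for s t
  proof -
    have "p s \<in> S" "q 0 \<in> S" "q t \<in> S" using S(2,3) st by auto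
    then have "d (p s) (q t) \<le> d (p s) (p D) + d (q 0) (q t)"
      using ext_metric_triangle[OF S(1)] assms(8) by metis
    also have "\<dots> = ennreal (D - s) + ennreal t"
      using assms(4-7) st unfolding isometric_on_def by auto
    also have "\<dots> = ennreal (D - s + t)" using st by (simp add: ennreal_plus)
    finally show ?thesis .
  qed
  have qp: "d (q t) (p s) \<le> ennreal (D - s + t)" if "s \<in> {0..D}" "t \<in> {0..D'}" for s t
  proof -
    have "p s \<in> S" "q t \<in> S" using S(2,3) that by auto
    then show ?thesis using pq[OF that] ext_metric_sym[OF S(1)] by metis
  qed
  show ?thesis unfolding nonexpansive_on_def
    using join_path_dist_rel[where rel = "(\<le>)", OF assms(4,6,7) order_refl pq qp] by blast
qed

lemma inj_on_join_path:
  assumes S: "ext_metric S d" "p ` {0..D} \<subseteq> S" "q ` {0..D'} \<subseteq> S"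
    and "0 \<le> D'" "isometric_on {0..D} d p" "isometric_on {0..D'} d q"
    and meet: "p ` {0..D} \<inter> q ` {0..D'} \<subseteq> {q 0}"
  shows "inj_on (join_path D p q) {0..D + D'}"
proof (rule inj_onI)
  have p: "inj_on p {0..D}" by (rule isometric_on_inj_on[OF S(1,2) assms(5)])
  have q: "inj_on q {0..D'}" by (rule isometric_on_inj_on[OF S(1,3) assms(6)])
  have no_cross: False
    if s: "s \<in> {0..D}" and t: "t \<in> {0..D + D'}" "\<not> t \<le> D" and eq: "p s = q (t - D)" for s t
  proof -
    have t': "t - D \<in> {0..D'}" using t by auto
    have "q (t - D) \<in> p ` {0..D} \<inter> q ` {0..D'}"
      using s t' eq[symmetric] by blast
    then have "q (t - D) = q 0" using meet by blast
    then have "t - D = 0" using inj_onD[OF q _ t'] assms(4) by simp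
    then show False using t by simp
  qed
  fix s t assume st: "s \<in> {0..D + D'}" "t \<in> {0..D + D'}"
    and eq: "join_path D p q s = join_path D p q t"
  show "s = t"
  proof (cases "s \<le> D"; cases "t \<le> D")
    assume "s \<le> D" "t \<le> D"
    then have "p s = p t" "s \<in> {0..D}" "t \<in> {0..D}" using eq st by (auto simp: join_path_def)
    then show ?thesis using inj_onD[OF p] by blast
  next
    assume "\<not> s \<le> D" "\<not> t \<le> D"
    then have "q (s - D) = q (t - D)" "s - D \<in> {0..D'}" "t - D \<in> {0..D'}"
      using eq st by (auto simp: join_path_def)
    then have "s - D = t - D" using inj_onD[OF q] by blast
    then show ?thesis by simp
  next
    assume "s \<le> D" "\<not> t \<le> D"
    then show ?thesis using no_cross[of s t] eq st by (simp add: join_path_def)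
  next
    assume "\<not> s \<le> D" "t \<le> D"
    then show ?thesis using no_cross[of t s] eq st by (simp add: join_path_def)
  qed
qed

section \<open>Geodesics in R-trees\<close>

lemma r_tree_ext_metric: "r_tree T d \<Longrightarrow> ext_metric T d"
  unfolding r_tree_def by (elim conjE)

lemma r_tree_dist_finite:
  assumes "r_tree T d" "x \<in> T" "y \<in> T"
  shows "d x y < \<infinity>"
proof -
  have "\<forall>x\<in>T. \<forall>y\<in>T. d x y < \<infinity>" using assms(1) unfolding r_tree_def by (elim conjE)
  then show ?thesis using assms(2,3) by blast
qed

lemma r_tree_complete: "r_tree T d \<Longrightarrow> ext_complete T d"
  unfolding r_tree_def by (elim conjE)

lemma r_tree_unique_arc:
  assumes "r_tree T d" "x \<in> T" "y \<in> T"
  shows "\<exists>!G. arc_between T d x y G"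
proof -
  have "\<forall>x\<in>T. \<forall>y\<in>T. \<exists>!G. arc_between T d x y G" using assms(1) unfolding r_tree_def by (elim conjE)
  then show ?thesis using assms(2,3) by blast
qed

lemma r_tree_arc_exists:
  assumes "r_tree T d" "x \<in> T" "y \<in> T"
  obtains G where "arc_between T d x y G"
  using r_tree_unique_arc[OF assms] by blast

lemma r_tree_arc_unique:
  assumes "r_tree T d" "arc_between T d x y G" "arc_between T d x y G'"
  shows "G = G'"
proof -
  have "x \<in> T" "y \<in> T" using arc_betweenD[OF assms(2)] by blast+
  then have "\<exists>!G. arc_between T d x y G" by (rule r_tree_unique_arc[OF assms(1)])
  then show ?thesis using the1_equality assms(2,3) by metis
qed

lemma r_tree_arc_isometric_segment:
  assumes "r_tree T d" "arc_between T d x y G"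
  shows "isometric_segment d G"
proof -
  have "x \<in> T" "y \<in> T" using arc_betweenD[OF assms(2)] by blast+
  moreover have "\<forall>x\<in>T. \<forall>y\<in>T. \<forall>G. arc_between T d x y G \<longrightarrow> isometric_segment d G"
    using assms(1) unfolding r_tree_def isometric_segment_def isometric_on_def by (elim conjE)
  ultimately show ?thesis using assms(2) by blast
qed

lemma r_treeI:
  assumes "ext_metric T d" "\<And>x y. x \<in> T \<Longrightarrow> y \<in> T \<Longrightarrow> d x y < \<infinity>" "ext_complete T d"
    and "\<And>x y. x \<in> T \<Longrightarrow> y \<in> T \<Longrightarrow>
      \<exists>G. (\<forall>G'. arc_between T d x y G' \<longleftrightarrow> G' = G) \<and> isometric_segment d G"
  shows "r_tree T d"
  unfolding r_tree_def
proof (intro conjI ballI allI impI)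
  fix x y assume xy: "x \<in> T" "y \<in> T"
  obtain G where G: "\<forall>G'. arc_between T d x y G' \<longleftrightarrow> G' = G" "isometric_segment d G"
    using assms(4)[OF xy] by blast
  show "\<exists>!G. arc_between T d x y G" by (rule ex1I[of _ G]) (use G(1) in auto)
  fix G' assume "arc_between T d x y G'"
  then have "isometric_segment d G'" using G by simp
  then show "\<exists>L \<phi>. 0 \<le> L \<and> \<phi> ` {0..L} = G' \<and>
      (\<forall>s\<in>{0..L}. \<forall>t\<in>{0..L}. d (\<phi> s) (\<phi> t) = ennreal \<bar>s - t\<bar>)"
    unfolding isometric_segment_def isometric_on_def .
next
  fix x y assume "x \<in> T" "y \<in> T"
  then show "d x y < \<infinity>" by (rule assms(2))
qed (fact assms(1), fact assms(3))

lemma r_tree_geodesic: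
  assumes tree: "r_tree T d" and arc: "arc_between T d x y G"
  obtains \<psi> D where "0 \<le> D" "d x y = ennreal D" "\<psi> 0 = x" "\<psi> D = y" "\<psi> ` {0..D} = G"
    "isometric_on {0..D} d \<psi>"
proof -
  obtain L \<phi> where L: "0 \<le> L" "\<phi> ` {0..L} = G" and \<phi>: "isometric_on {0..L} d \<phi>"
    using r_tree_arc_isometric_segment[OF tree arc] unfolding isometric_segment_def by blast
  have G: "x \<in> G" "y \<in> G" "G \<subseteq> T" using arc_betweenD[OF arc] by blast+
  obtain s0 s1 where s0: "s0 \<in> {0..L}" "\<phi> s0 = x" and s1: "s1 \<in> {0..L}" "\<phi> s1 = y"
    using G(1,2) L(2) by blast
  define \<sigma> :: real where "\<sigma> = (if s0 \<le> s1 then 1 else -1)"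
  define D where "D = \<bar>s1 - s0\<bar>"
  define \<psi> where "\<psi> t = \<phi> (s0 + \<sigma> * t)" for t
  have D: "0 \<le> D" "s0 + \<sigma> * D = s1" unfolding D_def \<sigma>_def by auto
  have in_range: "s0 + \<sigma> * t \<in> {0..L}" if "t \<in> {0..D}" for t
    using that s0(1) s1(1) unfolding \<sigma>_def D_def by (cases "s0 \<le> s1") auto
  have \<psi>: "isometric_on {0..D} d \<psi>"
    unfolding isometric_on_def
  proof (intro ballI)
    fix s t assume "s \<in> {0..D}" "t \<in> {0..D}"
    then have "d (\<psi> s) (\<psi> t) = ennreal \<bar>(s0 + \<sigma> * s) - (s0 + \<sigma> * t)\<bar>"
      unfolding \<psi>_def by (intro isometric_onD[OF \<phi>] in_range)
    also have "\<bar>(s0 + \<sigma> * s) - (s0 + \<sigma> * t)\<bar> = \<bar>s - t\<bar>"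
      unfolding \<sigma>_def by (simp add: abs_minus_commute)
    finally show "d (\<psi> s) (\<psi> t) = ennreal \<bar>s - t\<bar>" .
  qed
  have ends: "\<psi> 0 = x" "\<psi> D = y" unfolding \<psi>_def using s0 s1 D by auto
  have "\<psi> ` {0..D} \<subseteq> G" unfolding \<psi>_def using in_range L(2) by auto
  then have "arc_between T d (\<psi> 0) (\<psi> D) (\<psi> ` {0..D})"
    using arc_between_isometric[OF r_tree_ext_metric[OF tree] \<psi>, of 0 D] G(3) D(1) by auto
  then have img: "\<psi> ` {0..D} = G" using r_tree_arc_unique[OF tree _ arc] ends by simp
  have "d x y = ennreal D"
    using isometric_onD[OF \<phi> s0(1) s1(1)] s0(2) s1(2) unfolding D_def by (simp add: abs_minus_commute)
  then show ?thesis by (rule that[OF D(1) _ ends img \<psi>])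
qed

lemma r_tree_dist_add:
  assumes tree: "r_tree T d" and arc: "arc_between T d x y G" and u: "u \<in> G"
  shows "d x y = d x u + d u y"
proof -
  obtain \<psi> D where \<psi>: "0 \<le> D" "d x y = ennreal D" "\<psi> 0 = x" "\<psi> D = y" "\<psi> ` {0..D} = G"
    "isometric_on {0..D} d \<psi>"
    by (rule r_tree_geodesic[OF tree arc])
  from u obtain t where t: "t \<in> {0..D}" "u = \<psi> t" unfolding \<psi>(5)[symmetric] by (rule imageE)
  have "d (\<psi> 0) (\<psi> t) = ennreal \<bar>0 - t\<bar>"
    by (rule isometric_onD[OF \<psi>(6)]) (use \<psi>(1) t(1) in simp_all)
  then have xu: "d x u = ennreal t" using \<psi>(3) t by simp
  have "d (\<psi> t) (\<psi> D) = ennreal \<bar>t - D\<bar>"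
    by (rule isometric_onD[OF \<psi>(6)]) (use \<psi>(1) t(1) in simp_all)
  then have uy: "d u y = ennreal (D - t)" using \<psi>(4) t by simp
  have "ennreal D = ennreal t + ennreal (D - t)"
    using t(1) by (simp add: ennreal_plus[symmetric] del: ennreal_plus)
  then show ?thesis using \<psi>(2) xu uy by simp
qed

lemma r_tree_arc_concat:
  assumes tree: "r_tree T d" and arc1: "arc_between T d u v G1" and arc2: "arc_between T d v w G2"
    and meet: "G1 \<inter> G2 \<subseteq> {v}"
  shows "arc_between T d u w (G1 \<union> G2)"
proof -
  have S: "ext_metric T d" by (rule r_tree_ext_metric[OF tree])
  obtain p D where p: "0 \<le> D" "d u v = ennreal D" "p 0 = u" "p D = v" "p ` {0..D} = G1"
    "isometric_on {0..D} d p"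
    by (rule r_tree_geodesic[OF tree arc1])
  obtain q D' where q: "0 \<le> D'" "d v w = ennreal D'" "q 0 = v" "q D' = w" "q ` {0..D'} = G2"
    "isometric_on {0..D'} d q"
    by (rule r_tree_geodesic[OF tree arc2])
  have GT: "G1 \<subseteq> T" "G2 \<subseteq> T" using arc_betweenD(3)[OF arc1] arc_betweenD(3)[OF arc2] .
  have "nonexpansive_on {0..D + D'} d (join_path D p q)"
    by (rule nonexpansive_on_join_path[OF S]) (use p q GT in auto)
  moreover have "inj_on (join_path D p q) {0..D + D'}"
    by (rule inj_on_join_path[OF S]) (use p q GT meet in auto)
  moreover have img: "join_path D p q ` {0..D + D'} = G1 \<union> G2"
    using join_path_image[of D D' p q] p q by auto
  ultimately have "arc_between T d (join_path D p q 0) (join_path D p q (D + D'))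
      (join_path D p q ` {0..D + D'})"
    using GT p(1) q(1) by (intro arc_between_nonexpansive) auto
  moreover have "join_path D p q 0 = u" using join_path_start[OF p(1), of p q] p(3) by (rule trans)
  moreover have "join_path D p q (D + D') = w"
    using join_path_end[OF q(1), of p D q] p(4) q(3,4) by simp
  ultimately show ?thesis using img by simp
qed

lemma r_tree_dist_concat:
  assumes tree: "r_tree T d" and arc1: "arc_between T d u v G1" and arc2: "arc_between T d v w G2"
    and meet: "G1 \<inter> G2 \<subseteq> {v}"
  shows "d u w = d u v + d v w"
  using r_tree_dist_add[OF tree r_tree_arc_concat[OF assms]] arc_betweenD(2)[OF arc1] by blast

lemma r_tree_isometric_arc_join:
  assumes T: "ext_metric T d"
    and G1: "r_tree T1 d" "arc_between T1 d x p G1" and G2: "r_tree T2 d" "arc_between T2 d p y G2"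
    and sub: "G1 \<subseteq> T" "G2 \<subseteq> T"
    and through: "\<And>u v. u \<in> G1 \<Longrightarrow> v \<in> G2 \<Longrightarrow> d u v = d u p + d p v"
  shows "arc_between T d x y (G1 \<union> G2)" and "isometric_segment d (G1 \<union> G2)"
proof -
  obtain \<psi>1 D1 where \<psi>1: "0 \<le> D1" "d x p = ennreal D1" "\<psi>1 0 = x" "\<psi>1 D1 = p" "\<psi>1 ` {0..D1} = G1"
    "isometric_on {0..D1} d \<psi>1"
    by (rule r_tree_geodesic[OF G1])
  obtain \<psi>2 D2 where \<psi>2: "0 \<le> D2" "d p y = ennreal D2" "\<psi>2 0 = p" "\<psi>2 D2 = y" "\<psi>2 ` {0..D2} = G2"
    "isometric_on {0..D2} d \<psi>2"
    by (rule r_tree_geodesic[OF G2])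
  have cross: "d (\<psi>1 s) (\<psi>2 t) = ennreal (D1 - s + t)" if s: "s \<in> {0..D1}" and t: "t \<in> {0..D2}" for s t
  proof -
    have "\<psi>1 s \<in> G1" "\<psi>2 t \<in> G2" using s t unfolding \<psi>1(5)[symmetric] \<psi>2(5)[symmetric] by auto
    then have "d (\<psi>1 s) (\<psi>2 t) = d (\<psi>1 s) p + d p (\<psi>2 t)" by (rule through)
    also have "d (\<psi>1 s) p = ennreal (D1 - s)"
      using isometric_onD[OF \<psi>1(6) s, of D1] \<psi>1(1,4) s by simp
    also have "d p (\<psi>2 t) = ennreal t"
      using isometric_onD[OF \<psi>2(6) _ t, of 0] \<psi>2(1,3) t by simp
    finally show ?thesis using s t by (simp add: ennreal_plus)
  qed
  have iso: "isometric_on {0..D1 + D2} d (join_path D1 \<psi>1 \<psi>2)"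
    by (rule isometric_on_join_path[OF T _ _ \<psi>1(1,6) \<psi>2(6) cross]) (use sub \<psi>1(5) \<psi>2(5) in auto)
  have img: "join_path D1 \<psi>1 \<psi>2 ` {0..D1 + D2} = G1 \<union> G2"
    using join_path_image[OF \<psi>1(1) \<psi>2(1), of \<psi>1 \<psi>2] \<psi>1(4,5) \<psi>2(3,5) by simp
  show "isometric_segment d (G1 \<union> G2)"
    unfolding isometric_segment_def using iso img \<psi>1(1) \<psi>2(1) by (intro exI[of _ "D1 + D2"]) auto
  have "arc_between T d (join_path D1 \<psi>1 \<psi>2 0) (join_path D1 \<psi>1 \<psi>2 (D1 + D2))
      (join_path D1 \<psi>1 \<psi>2 ` {0..D1 + D2})"
    by (rule arc_between_isometric[OF T iso]) (use img sub \<psi>1(1) \<psi>2(1) in auto)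
  moreover have "join_path D1 \<psi>1 \<psi>2 0 = x" using join_path_start[OF \<psi>1(1), of \<psi>1 \<psi>2] \<psi>1(3) by simp
  moreover have "join_path D1 \<psi>1 \<psi>2 (D1 + D2) = y"
    using join_path_end[OF \<psi>2(1), of \<psi>1 D1 \<psi>2] \<psi>1(4) \<psi>2(3,4) by simp
  ultimately show "arc_between T d x y (G1 \<union> G2)" using img by simp
qed

section \<open>Completeness\<close>

lemma ext_metric_triangle_half:
  assumes "ext_metric M d" "x \<in> M" "y \<in> M" "z \<in> M"
    and "d x y < ennreal (e / 2)" "d y z < ennreal (e / 2)"
  shows "d x z < ennreal e"
proof -
  have "d x y + d y z < ennreal e"
    using add_mono_ennreal[OF assms(5,6)] by simp
  then show ?thesis using ext_metric_triangle[OF assms(1-4)] by (rule le_less_trans[rotated])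
qed

lemma inverse_Suc_eventually_less:
  assumes "0 < e"
  shows "\<exists>N. \<forall>n\<ge>N. inverse (real (Suc n)) < e"
proof -
  have "\<forall>\<^sub>F n in sequentially. inverse (real (Suc n)) < e"
    using LIMSEQ_inverse_real_of_nat assms by (rule order_tendstoD)
  then show ?thesis unfolding eventually_sequentially .
qed

lemma ext_completeD:
  "ext_complete S d \<Longrightarrow> (\<And>n. s n \<in> S) \<Longrightarrow> ext_cauchy d s \<Longrightarrow> \<exists>x\<in>S. ext_converges_to d s x"
  unfolding ext_complete_def by blast

lemma ext_converges_imp_cauchy:
  assumes "ext_metric M d" "\<And>n. s n \<in> M" "x \<in> M" "ext_converges_to d s x"
  shows "ext_cauchy d s"
  unfolding ext_cauchy_def
proof (intro allI impI)
  fix e :: real assume "0 < e"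
  then have "0 < e / 2" by simp
  then obtain N where N: "\<forall>n\<ge>N. d (s n) x < ennreal (e / 2)"
    using assms(4) unfolding ext_converges_to_def by blast
  have "d (s m) (s n) < ennreal e" if "N \<le> m" "N \<le> n" for m n
  proof (rule ext_metric_triangle_half[OF assms(1,2,3,2)])
    show "d (s m) x < ennreal (e / 2)" using N that(1) by blast
    have "d x (s n) = d (s n) x" by (rule ext_metric_sym[OF assms(1,3,2)])
    then show "d x (s n) < ennreal (e / 2)" using N that(2) by simp
  qed
  then show "\<exists>N. \<forall>m\<ge>N. \<forall>n\<ge>N. d (s m) (s n) < ennreal e" by blast
qed

lemma ext_limit_unique:
  assumes "ext_metric M d" "\<And>n. s n \<in> M" "x \<in> M" "z \<in> M"
    and "ext_converges_to d s x" "ext_converges_to d s z"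
  shows "x = z"
proof -
  have small: "d x z \<le> ennreal e" if "0 < e" for e :: real
  proof -
    have e2: "0 < e / 2" using that by simp
    obtain N1 where N1: "\<forall>n\<ge>N1. d (s n) x < ennreal (e / 2)"
      using assms(5) e2 unfolding ext_converges_to_def by blast
    obtain N2 where N2: "\<forall>n\<ge>N2. d (s n) z < ennreal (e / 2)"
      using assms(6) e2 unfolding ext_converges_to_def by blast
    define n where "n = max N1 N2"
    have "d x (s n) = d (s n) x" by (rule ext_metric_sym[OF assms(1,3,2)])
    then have "d x (s n) < ennreal (e / 2)" using N1 unfolding n_def by simp
    moreover have "d (s n) z < ennreal (e / 2)" using N2 unfolding n_def by simp
    ultimately have "d x z < ennreal e" by (rule ext_metric_triangle_half[OF assms(1,3,2,4)])
    then show ?thesis by simp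
  qed
  have "d x z \<le> 0"
  proof (rule ennreal_le_epsilon)
    fix e :: real assume "0 < e"
    then show "d x z \<le> 0 + ennreal e" using small by simp
  qed
  then have "d x z = 0" by simp
  then show ?thesis using ext_metric_eq_0[OF assms(1,3,4)] by simp
qed

lemma ext_complete_subset_closed:
  assumes M: "ext_metric M d" "S \<subseteq> M" and S: "ext_complete S d" and x: "x \<in> M"
    and approx: "\<And>e::real. 0 < e \<Longrightarrow> \<exists>y\<in>S. d x y < ennreal e"
  shows "x \<in> S"
proof -
  have "\<forall>n. \<exists>y. y \<in> S \<and> d x y < ennreal (inverse (real (Suc n)))"
  proof
    fix n :: nat
    have "0 < inverse (real (Suc n))" by simp
    then show "\<exists>y. y \<in> S \<and> d x y < ennreal (inverse (real (Suc n)))" using approx by blast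
  qed
  then obtain y where y: "\<And>n. y n \<in> S" "\<And>n. d x (y n) < ennreal (inverse (real (Suc n)))"
    by (auto simp: choice_iff)
  have yM: "y n \<in> M" for n using y(1) M(2) by blast
  have lim: "ext_converges_to d y x"
    unfolding ext_converges_to_def
  proof (intro allI impI)
    fix e :: real assume "0 < e"
    then obtain N where N: "\<forall>n\<ge>N. inverse (real (Suc n)) < e"
      using inverse_Suc_eventually_less by blast
    have "d (y n) x < ennreal e" if "N \<le> n" for n
    proof -
      have "d (y n) x = d x (y n)" using ext_metric_sym[OF M(1) yM x] .
      also have "\<dots> < ennreal (inverse (real (Suc n)))" by (rule y(2))
      also have "\<dots> \<le> ennreal e"
        using N that by (intro ennreal_leI) (simp add: less_imp_le)
      finally show ?thesis .
    qed
    then show "\<exists>N. \<forall>n\<ge>N. d (y n) x < ennreal e" by blast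
  qed
  have "ext_cauchy d y" by (rule ext_converges_imp_cauchy[OF M(1) yM x lim])
  then obtain z where z: "z \<in> S" "ext_converges_to d y z"
    using ext_completeD[OF S, of y, OF y(1)] by blast
  have "x = z" using ext_limit_unique[OF M(1) yM x _ lim z(2)] z(1) M(2) by blast
  then show ?thesis using z(1) by simp
qed

lemma ext_complete_subset_separated:
  assumes "ext_metric M d" "S \<subseteq> M" "ext_complete S d" "x \<in> M" "x \<notin> S"
  obtains e :: real where "0 < e" "\<And>y. y \<in> S \<Longrightarrow> ennreal e \<le> d x y"
proof -
  have "\<not> (\<forall>e::real. 0 < e \<longrightarrow> (\<exists>y\<in>S. d x y < ennreal e))"
    using ext_complete_subset_closed[OF assms(1-4)] assms(5) by blast
  then obtain e :: real where e: "0 < e" "\<forall>y\<in>S. \<not> d x y < ennreal e" by blast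
  show ?thesis by (rule that[OF e(1)]) (use e(2) in \<open>simp add: not_less\<close>)
qed

lemma ext_cauchy_subseq:
  assumes "ext_cauchy d s" "\<And>n. n \<le> idx n"
  shows "ext_cauchy d (\<lambda>n. s (idx n))"
  unfolding ext_cauchy_def
proof (intro allI impI)
  fix e :: real assume "0 < e"
  then obtain N where N: "\<forall>m\<ge>N. \<forall>n\<ge>N. d (s m) (s n) < ennreal e"
    using assms(1) unfolding ext_cauchy_def by blast
  have "d (s (idx m)) (s (idx n)) < ennreal e" if "N \<le> m" "N \<le> n" for m n
  proof -
    have "N \<le> idx m" "N \<le> idx n" using that assms(2)[of m] assms(2)[of n] by linarith+
    then show ?thesis using N by blast
  qed
  then show "\<exists>N. \<forall>m\<ge>N. \<forall>n\<ge>N. d (s (idx m)) (s (idx n)) < ennreal e" by blast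
qed

lemma ext_cauchy_converges_subseq:
  assumes M: "ext_metric M d" "\<And>n. s n \<in> M" "z \<in> M"
    and s: "ext_cauchy d s" and idx: "\<And>n. n \<le> idx n"
    and lim: "ext_converges_to d (\<lambda>n. s (idx n)) z"
  shows "ext_converges_to d s z"
  unfolding ext_converges_to_def
proof (intro allI impI)
  fix e :: real assume "0 < e"
  then have e2: "0 < e / 2" by simp
  obtain N1 where N1: "\<forall>m\<ge>N1. \<forall>n\<ge>N1. d (s m) (s n) < ennreal (e / 2)"
    using s e2 unfolding ext_cauchy_def by blast
  obtain N2 where N2: "\<forall>n\<ge>N2. d (s (idx n)) z < ennreal (e / 2)"
    using lim e2 unfolding ext_converges_to_def by blast
  have "d (s n) z < ennreal e" if "max N1 N2 \<le> n" for n
  proof (rule ext_metric_triangle_half[OF M(1,2,2,3)])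
    have "N1 \<le> n" "N1 \<le> idx n" "N2 \<le> n" using that idx[of n] by linarith+
    then show "d (s n) (s (idx n)) < ennreal (e / 2)" "d (s (idx n)) z < ennreal (e / 2)"
      using N1 N2 by blast+
  qed
  then show "\<exists>N. \<forall>n\<ge>N. d (s n) z < ennreal e" by blast
qed

lemma ext_cauchy_frequently_in_complete:
  assumes M: "ext_metric M d" "S \<subseteq> M" and S: "ext_complete S d"
    and s: "\<And>n. s n \<in> M" "ext_cauchy d s" and freq: "\<And>N. \<exists>n\<ge>N. s n \<in> S"
  shows "\<exists>z\<in>S. ext_converges_to d s z"
proof -
  have "\<forall>n. \<exists>m. n \<le> m \<and> s m \<in> S" using freq by blast
  then obtain idx where idx: "\<forall>n. n \<le> idx n \<and> s (idx n) \<in> S" by (auto dest: choice)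
  then obtain z where z: "z \<in> S" "ext_converges_to d (\<lambda>n. s (idx n)) z"
    using ext_completeD[OF S, of "\<lambda>n. s (idx n)"] ext_cauchy_subseq[OF s(2)] by blast
  then have "ext_converges_to d s z"
    using ext_cauchy_converges_subseq[OF M(1) s(1) _ s(2)] idx M(2) by blast
  then show ?thesis using z(1) by blast
qed

lemma ext_complete_finite_component:
  assumes S: "ext_metric S d" "ext_complete S d" and x: "x \<in> S"
  shows "ext_complete (finite_component S d x) d"
  unfolding ext_complete_def
proof (intro allI impI; elim conjE)
  fix s assume s: "\<forall>n. s n \<in> finite_component S d x" and cauchy: "ext_cauchy d s"
  have "s n \<in> S" for n using finite_component_subset s[rule_format, of n] by (rule subsetD)
  then obtain z where z: "z \<in> S" "ext_converges_to d s z"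
    using ext_completeD[OF S(2), of s] cauchy by blast
  have "\<exists>N. \<forall>n\<ge>N. d (s n) z < ennreal 1"
    using z(2) unfolding ext_converges_to_def by (rule allE[where x = 1]) simp
  then obtain N where "d (s N) z < ennreal 1" by blast
  then have "d (s N) z < \<infinity>" using ennreal_less_top[of 1] unfolding infinity_ennreal_def
    by (rule order.strict_trans)
  then have "z \<in> finite_component S d (s N)" using z(1) unfolding finite_component_def by blast
  also have "\<dots> = finite_component S d x" using s by (intro finite_component_eq[OF S(1) x]) blast
  finally show "\<exists>y\<in>finite_component S d x. ext_converges_to d s y" using z(2) by blast
qed

lemma closed_path_preimage_complete:
  assumes g: "path_cont_on {a..b} d g" and M: "ext_metric M d" "g ` {a..b} \<subseteq> M" "S \<subseteq> M"
    and S: "ext_complete S d"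
  shows "closed {t\<in>{a..b}. g t \<in> S}"
  unfolding closed_sequential_limits
proof (intro allI impI; elim conjE)
  fix x l assume x: "\<forall>n. x n \<in> {t\<in>{a..b}. g t \<in> S}" and lim: "x \<longlonglongrightarrow> l"
  have l: "l \<in> {a..b}"
    using closed_sequential_limits[THEN iffD1, OF closed_atLeastAtMost[of a b]] x lim by blast
  show "l \<in> {t\<in>{a..b}. g t \<in> S}"
  proof (rule ccontr)
    assume "l \<notin> {t\<in>{a..b}. g t \<in> S}"
    then have "g l \<notin> S" using l by blast
    moreover have gl: "g l \<in> M" using M(2) l by blast
    ultimately obtain e :: real where e: "0 < e" "\<And>y. y \<in> S \<Longrightarrow> ennreal e \<le> d (g l) y"
      using ext_complete_subset_separated[OF M(1,3) S] by blast
    obtain \<delta> where \<delta>: "0 < \<delta>" "\<And>s. s \<in> {a..b} \<Longrightarrow> \<bar>s - l\<bar> < \<delta> \<Longrightarrow> d (g s) (g l) < ennreal e"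
      using g l e(1) unfolding path_cont_on_def by blast
    obtain n where "dist (x n) l < \<delta>" using lim \<delta>(1) unfolding lim_sequentially by blast
    then have "d (g (x n)) (g l) < ennreal e" using \<delta>(2) x by (simp add: dist_real_def)
    moreover have "g (x n) \<in> S" "g (x n) \<in> M" using x M(2) by auto
    ultimately show False using e(2) ext_metric_sym[OF M(1) gl] by (metis not_le)
  qed
qed

section \<open>Isometric images\<close>

definition isometry_on :: "'a set \<Rightarrow> ('a \<Rightarrow> 'a \<Rightarrow> ennreal) \<Rightarrow> ('b \<Rightarrow> 'b \<Rightarrow> ennreal) \<Rightarrow> ('a \<Rightarrow> 'b) \<Rightarrow> bool"
  where "isometry_on S d d' h \<longleftrightarrow> (\<forall>x\<in>S. \<forall>y\<in>S. d' (h x) (h y) = d x y)"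

lemma isometry_onD: "isometry_on S d d' h \<Longrightarrow> x \<in> S \<Longrightarrow> y \<in> S \<Longrightarrow> d' (h x) (h y) = d x y"
  unfolding isometry_on_def by blast

lemma isometry_on_subset: "isometry_on S d d' h \<Longrightarrow> S' \<subseteq> S \<Longrightarrow> isometry_on S' d d' h"
  unfolding isometry_on_def by blast

lemma isometry_on_inj_on:
  assumes S: "ext_metric S d" and h: "isometry_on S d d' h"
  shows "inj_on h S"
proof (rule inj_onI)
  fix x y assume xy: "x \<in> S" "y \<in> S" "h x = h y"
  have "d x y = d' (h x) (h y)" using isometry_onD[OF h xy(1,2)] by simp
  also have "\<dots> = d' (h x) (h x)" using xy(3) by simp
  also have "\<dots> = 0" using isometry_onD[OF h xy(1,1)] ext_metric_refl[OF S xy(1)] by simp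
  finally show "x = y" by (rule ext_metric_eq_0[OF S xy(1,2)])
qed

lemma isometry_on_inv_into:
  assumes S: "ext_metric S d" and h: "isometry_on S d d' h"
  shows "isometry_on (h ` S) d' d (inv_into S h)"
  unfolding isometry_on_def
proof (intro ballI)
  fix x' y' assume "x' \<in> h ` S" "y' \<in> h ` S"
  then obtain x y where "x \<in> S" "y \<in> S" "x' = h x" "y' = h y" by blast
  then show "d (inv_into S h x') (inv_into S h y') = d' x' y'"
    using isometry_onD[OF h] isometry_on_inj_on[OF S h] by simp
qed

lemma ext_metric_image:
  assumes S: "ext_metric S d" and h: "isometry_on S d d' h"
  shows "ext_metric (h ` S) d'"
  unfolding ext_metric_def
proof (intro conjI ballI)
  have inj: "inj_on h S" by (rule isometry_on_inj_on[OF S h])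
  fix x' y' assume "x' \<in> h ` S" "y' \<in> h ` S"
  then obtain x y where xy: "x \<in> S" "y \<in> S" "x' = h x" "y' = h y" by blast
  have "d x y = 0 \<longleftrightarrow> x = y" using S xy(1,2) unfolding ext_metric_def by blast
  then show "d' x' y' = 0 \<longleftrightarrow> x' = y'"
    using isometry_onD[OF h xy(1,2)] xy(3,4) inj_on_eq_iff[OF inj xy(1,2)] by simp
  show "d' x' y' = d' y' x'"
    using isometry_onD[OF h] ext_metric_sym[OF S] xy by simp
  fix z' assume "z' \<in> h ` S"
  then obtain z where z: "z \<in> S" "z' = h z" by blast
  show "d' x' z' \<le> d' x' y' + d' y' z'"
    using isometry_onD[OF h] ext_metric_triangle[OF S xy(1,2) z(1)] xy z by simp
qed

lemma ext_complete_image: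
  assumes S: "ext_metric S d" "ext_complete S d" and h: "isometry_on S d d' h"
  shows "ext_complete (h ` S) d'"
  unfolding ext_complete_def
proof (intro allI impI; elim conjE)
  fix s' assume s': "\<forall>n. s' n \<in> h ` S" and cauchy: "ext_cauchy d' s'"
  define s where "s n = inv_into S h (s' n)" for n
  have s: "s n \<in> S" "h (s n) = s' n" for n
    unfolding s_def using s' by (auto intro: inv_into_into f_inv_into_f)
  have dist: "d (s m) (s n) = d' (s' m) (s' n)" for m n
    using isometry_onD[OF h s(1) s(1), of m n] s(2) by simp
  have "ext_cauchy d s" using cauchy unfolding ext_cauchy_def dist .
  then obtain z where z: "z \<in> S" "ext_converges_to d s z"
    using ext_completeD[OF S(2), of s] s(1) by blast
  have "d' (s' n) (h z) = d (s n) z" for n using isometry_onD[OF h s(1) z(1), of n] s(2) by simp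
  then have "ext_converges_to d' s' (h z)" using z(2) unfolding ext_converges_to_def by simp
  then show "\<exists>x\<in>h ` S. ext_converges_to d' s' x" using z(1) by blast
qed

lemma arc_between_image:
  assumes S: "ext_metric S d" and h: "isometry_on S d d' h" and arc: "arc_between S d x y G"
  shows "arc_between (h ` S) d' (h x) (h y) (h ` G)"
proof -
  obtain a b g where g: "a \<le> b" "g ` {a..b} = G" "G \<subseteq> S" "inj_on g {a..b}"
    "path_cont_on {a..b} d g" "g a = x" "g b = y"
    by (rule arc_betweenE[OF arc])
  have gS: "g t \<in> S" if "t \<in> {a..b}" for t using g(2,3) that by blast
  have "path_cont_on {a..b} d' (h \<circ> g)"
    using g(5) unfolding path_cont_on_def comp_def by (simp add: isometry_onD[OF h gS gS])
  moreover have "inj_on (h \<circ> g) {a..b}"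
    using g(4) isometry_on_inj_on[OF S h] g(2,3) by (simp add: comp_inj_on inj_on_subset)
  moreover have "(h \<circ> g) ` {a..b} = h ` G" unfolding g(2)[symmetric] by (rule image_comp[symmetric])
  moreover have "h ` G \<subseteq> h ` S" using g(3) by (rule image_mono)
  ultimately show ?thesis
    unfolding arc_between_def using g(1,6,7)
    by (intro exI[of _ a] exI[of _ b] exI[of _ "h \<circ> g"]) simp
qed

lemma isometric_segment_image:
  assumes h: "isometry_on S d d' h" and G: "G \<subseteq> S" "isometric_segment d G"
  shows "isometric_segment d' (h ` G)"
proof -
  obtain L \<phi> where \<phi>: "0 \<le> L" "\<phi> ` {0..L} = G" "isometric_on {0..L} d \<phi>"
    using G(2) unfolding isometric_segment_def by blast
  have "\<phi> s \<in> S" if "s \<in> {0..L}" for s using \<phi>(2) G(1) that by blast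
  then have "isometric_on {0..L} d' (h \<circ> \<phi>)"
    using \<phi>(3) unfolding isometric_on_def by (simp add: isometry_onD[OF h])
  moreover have "(h \<circ> \<phi>) ` {0..L} = h ` G" unfolding \<phi>(2)[symmetric] by (rule image_comp[symmetric])
  ultimately show ?thesis unfolding isometric_segment_def using \<phi>(1) by blast
qed

lemma r_tree_image:
  assumes tree: "r_tree T d" and h: "isometry_on T d d' h"
  shows "r_tree (h ` T) d'"
proof (rule r_treeI)
  have T: "ext_metric T d" by (rule r_tree_ext_metric[OF tree])
  have inj: "inj_on h T" by (rule isometry_on_inj_on[OF T h])
  have h': "isometry_on (h ` T) d' d (inv_into T h)" by (rule isometry_on_inv_into[OF T h])
  show "ext_metric (h ` T) d'" by (rule ext_metric_image[OF T h])
  show "ext_complete (h ` T) d'" by (rule ext_complete_image[OF T r_tree_complete[OF tree] h])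
  fix x' y' assume "x' \<in> h ` T" "y' \<in> h ` T"
  then obtain x y where xy: "x \<in> T" "y \<in> T" "x' = h x" "y' = h y" by blast
  show "d' x' y' < \<infinity>" using r_tree_dist_finite[OF tree xy(1,2)] isometry_onD[OF h xy(1,2)] xy(3,4) by simp
  obtain G where G: "arc_between T d x y G" by (rule r_tree_arc_exists[OF tree xy(1,2)])
  have "arc_between (h ` T) d' x' y' G' \<longleftrightarrow> G' = h ` G" for G'
  proof
    assume G': "arc_between (h ` T) d' x' y' G'"
    have "arc_between (inv_into T h ` h ` T) d (inv_into T h x') (inv_into T h y') (inv_into T h ` G')"
      by (rule arc_between_image[OF ext_metric_image[OF T h] h' G'])
    then have "arc_between T d x y (inv_into T h ` G')" using inj xy by simp
    then have "inv_into T h ` G' = G" by (rule r_tree_arc_unique[OF tree _ G])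
    moreover have "h ` inv_into T h ` G' = G'"
      using image_inv_into_cancel[OF refl arc_betweenD(3)[OF G']] .
    ultimately show "G' = h ` G" by simp
  next
    assume "G' = h ` G"
    then show "arc_between (h ` T) d' x' y' G'" using arc_between_image[OF T h G] xy(3,4) by simp
  qed
  moreover have "isometric_segment d' (h ` G)"
    by (rule isometric_segment_image[OF h arc_betweenD(3)[OF G] r_tree_arc_isometric_segment[OF tree G]])
  ultimately show "\<exists>G. (\<forall>G'. arc_between (h ` T) d' x' y' G' \<longleftrightarrow> G' = G) \<and> isometric_segment d' G"
    by blast
qed

lemma finite_component_image:
  assumes h: "isometry_on S d d' h" and x: "x \<in> S"
  shows "finite_component (h ` S) d' (h x) = h ` finite_component S d x"
  unfolding finite_component_def using isometry_onD[OF h x] by auto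

lemma r_forest_image:
  assumes forest: "r_forest S d" and h: "isometry_on S d d' h"
  shows "r_forest (h ` S) d'"
  unfolding r_forest_def
proof (intro conjI ballI)
  have S: "ext_metric S d" by (rule r_forest_ext_metric[OF forest])
  show "ext_metric (h ` S) d'" by (rule ext_metric_image[OF S h])
  show "ext_complete (h ` S) d'" by (rule ext_complete_image[OF S r_forest_complete[OF forest] h])
  fix x' assume "x' \<in> h ` S"
  then obtain x where x: "x \<in> S" "x' = h x" by blast
  have "r_tree (h ` finite_component S d x) d'"
    by (rule r_tree_image[OF r_forest_component[OF forest x(1)]
          isometry_on_subset[OF h finite_component_subset]])
  then show "r_tree {y \<in> h ` S. d' x' y < \<infinity>} d'"
    using finite_component_image[OF h x(1)] x(2) unfolding finite_component_def by simp
qed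

lemma lip_1_1_image:
  assumes "lip_1_1 S d R" "isometry_on S d d' h" "\<And>x y. x \<in> S \<Longrightarrow> y \<in> S \<Longrightarrow> R' (h x) (h y) = R x y"
  shows "lip_1_1 (h ` S) d' R'"
  using assms unfolding lip_1_1_def isometry_on_def by simp

section \<open>Gluing two R-forests along a common subforest\<close>

lemma INF_dist_via_subset_end:
  assumes "ext_metric S d" "A \<subseteq> S" "u \<in> S" "v \<in> A"
  shows "(INF a\<in>A. d u a + d a v) = d u v"
proof (rule antisym)
  have "(INF a\<in>A. d u a + d a v) \<le> d u v + d v v" using assms(4) by (rule INF_lower)
  then show "(INF a\<in>A. d u a + d a v) \<le> d u v"
    using ext_metric_refl[OF assms(1)] assms(2,4) by auto
  show "d u v \<le> (INF a\<in>A. d u a + d a v)"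
    using ext_metric_triangle[OF assms(1)] assms by (auto intro!: INF_greatest)
qed

lemma INF_dist_via_subset_start:
  assumes "ext_metric S d" "A \<subseteq> S" "u \<in> A" "v \<in> S"
  shows "(INF a\<in>A. d u a + d a v) = d u v"
proof (rule antisym)
  have "(INF a\<in>A. d u a + d a v) \<le> d u u + d u v" using assms(3) by (rule INF_lower)
  then show "(INF a\<in>A. d u a + d a v) \<le> d u v"
    using ext_metric_refl[OF assms(1)] assms(2,3) by auto
  show "d u v \<le> (INF a\<in>A. d u a + d a v)"
    using ext_metric_triangle[OF assms(1)] assms by (auto intro!: INF_greatest)
qed

lemma closed_gap_around:
  fixes S :: "real set"
  assumes "closed S" "a \<in> S" "b \<in> S" "a \<le> \<tau>" "\<tau> \<le> b" "\<tau> \<notin> S"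
  obtains s t where "s \<in> S" "t \<in> S" "s < \<tau>" "\<tau> < t" "\<And>u. s < u \<Longrightarrow> u < t \<Longrightarrow> u \<notin> S"
proof -
  define L where "L = S \<inter> {..\<tau>}"
  define U where "U = S \<inter> {\<tau>..}"
  have L: "closed L" "bdd_above L" "a \<in> L" unfolding L_def using assms by (auto intro: closed_Int)
  have U: "closed U" "bdd_below U" "b \<in> U" unfolding U_def using assms by (auto intro: closed_Int)
  have s: "Sup L \<in> L" using closed_contains_Sup[OF _ L(2,1)] L(3) by blast
  have t: "Inf U \<in> U" using closed_contains_Inf[OF _ U(2,1)] U(3) by blast
  show ?thesis
  proof (rule that)
    show "Sup L \<in> S" "Inf U \<in> S" using s t unfolding L_def U_def by auto
    show "Sup L < \<tau>" using s assms(6) unfolding L_def by (auto simp: order.order_iff_strict)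
    show "\<tau> < Inf U" using t assms(6) unfolding U_def by (auto simp: order.order_iff_strict)
    fix u assume u: "Sup L < u" "u < Inf U"
    show "u \<notin> S"
    proof
      assume "u \<in> S"
      then have "u \<in> L \<or> u \<in> U" unfolding L_def U_def by auto
      then show False
        using cSup_upper[OF _ L(2), of u] cInf_lower[OF _ U(2), of u] u by auto
    qed
  qed
qed

lemma r_tree_subarc_to_end:
  assumes tree: "r_tree T d" and arc: "arc_between T d x y G" and u: "u \<in> G"
  obtains G' where "arc_between T d u y G'" "G' \<subseteq> G"
proof -
  obtain \<psi> D where \<psi>: "0 \<le> D" "d x y = ennreal D" "\<psi> 0 = x" "\<psi> D = y" "\<psi> ` {0..D} = G"
    "isometric_on {0..D} d \<psi>"
    by (rule r_tree_geodesic[OF tree arc])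
  from u obtain t where t: "t \<in> {0..D}" "u = \<psi> t" unfolding \<psi>(5)[symmetric] by (rule imageE)
  have GT: "\<psi> ` {0..D} \<subseteq> T" using arc_betweenD(3)[OF arc] \<psi>(5) by simp
  have "arc_between T d (\<psi> t) (\<psi> D) (\<psi> ` {t..D})"
    by (rule arc_between_isometric[OF r_tree_ext_metric[OF tree] \<psi>(6) GT]) (use t in auto)
  moreover have "\<psi> ` {t..D} \<subseteq> G" using t(1) \<psi>(5) by auto
  ultimately show ?thesis using that t(2) \<psi>(4) by simp
qed

lemma r_tree_first_point_on_arc:
  assumes tree: "r_tree T d" and arc: "arc_between T d x a G"
    and M: "ext_metric M d" "T \<subseteq> M" "S \<subseteq> M" and S: "ext_complete S d" and a: "a \<in> S"
  obtains p G' where "p \<in> S" "arc_between T d x p G'" "G' \<inter> S \<subseteq> {p}"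
proof -
  obtain \<psi> D where \<psi>: "0 \<le> D" "d x a = ennreal D" "\<psi> 0 = x" "\<psi> D = a" "\<psi> ` {0..D} = G"
    "isometric_on {0..D} d \<psi>"
    by (rule r_tree_geodesic[OF tree arc])
  have \<psi>T: "\<psi> ` {0..D} \<subseteq> T" unfolding \<psi>(5) by (rule arc_betweenD(3)[OF arc])
  define I where "I = {t\<in>{0..D}. \<psi> t \<in> S}"
  have "closed I" unfolding I_def
    by (rule closed_path_preimage_complete[OF
          nonexpansive_on_imp_path_cont_on[OF isometric_on_imp_nonexpansive_on[OF \<psi>(6)]]
          M(1) order_trans[OF \<psi>T M(2)] M(3) S])
  moreover have "bdd_below I" unfolding I_def by (rule bdd_belowI[of _ 0]) auto
  moreover have "I \<noteq> {}" unfolding I_def using \<psi>(1,4) a by auto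
  ultimately have "Inf I \<in> I" using closed_contains_Inf by blast
  define t0 where "t0 = Inf I"
  have t0: "0 \<le> t0" "t0 \<le> D" "\<psi> t0 \<in> S" using \<open>Inf I \<in> I\<close> unfolding t0_def I_def by auto
  have first: "t0 \<le> t" if "t \<in> {0..D}" "\<psi> t \<in> S" for t
    unfolding t0_def using that by (intro cInf_lower \<open>bdd_below I\<close>) (simp add: I_def)
  have arc0: "arc_between T d x (\<psi> t0) (\<psi> ` {0..t0})"
    using arc_between_isometric[OF ext_metric_subset[OF M(1,2)] \<psi>(6) \<psi>T order_refl t0(1,2)] \<psi>(3)
    by simp
  moreover have "w = \<psi> t0" if w: "w \<in> \<psi> ` {0..t0}" "w \<in> S" for w
  proof -
    obtain t where t: "t \<in> {0..t0}" "w = \<psi> t" using w(1) by blast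
    then have "t0 \<le> t" using first[of t] w(2) t0(2) by auto
    then show ?thesis using t by simp
  qed
  ultimately show ?thesis using that t0(3) by blast
qed

text \<open>The cross-distance formula is imposed only on pairs with neither point in B \<inter> C; for
  the other pairs it follows from the triangle inequality (lemma cross).\<close>

locale forest_gluing =
  fixes B C :: "'a set" and d :: "'a \<Rightarrow> 'a \<Rightarrow> ennreal"
  assumes forest_B: "r_forest B d" and forest_C: "r_forest C d" and forest_A: "r_forest (B \<inter> C) d"
    and cross_BC: "\<And>u v. u \<in> B - C \<Longrightarrow> v \<in> C - B \<Longrightarrow> d u v = (INF a\<in>B \<inter> C. d u a + d a v)"
    and cross_CB: "\<And>u v. u \<in> C - B \<Longrightarrow> v \<in> B - C \<Longrightarrow> d u v = (INF a\<in>B \<inter> C. d u a + d a v)"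
begin

lemma ext_metric_B: "ext_metric B d" by (rule r_forest_ext_metric[OF forest_B])
lemma ext_metric_C: "ext_metric C d" by (rule r_forest_ext_metric[OF forest_C])
lemma ext_metric_A: "ext_metric (B \<inter> C) d" by (rule r_forest_ext_metric[OF forest_A])

lemma swap: "forest_gluing C B d"
proof
  show "r_forest C d" "r_forest B d" by (fact forest_C, fact forest_B)
  show "r_forest (C \<inter> B) d" using forest_A by (simp add: Int_commute)
  show "d u v = (INF a\<in>C \<inter> B. d u a + d a v)" if "u \<in> C - B" "v \<in> B - C" for u v
    using cross_CB[OF that] by (simp add: Int_commute)
  show "d u v = (INF a\<in>C \<inter> B. d u a + d a v)" if "u \<in> B - C" "v \<in> C - B" for u v
    using cross_BC[OF that] by (simp add: Int_commute)
qed

lemma cross: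
  assumes u: "u \<in> B" and v: "v \<in> C"
  shows "d u v = (INF a\<in>B \<inter> C. d u a + d a v)"
proof -
  consider "u \<in> C" | "v \<in> B" | "u \<in> B - C" "v \<in> C - B" using u v by blast
  then show ?thesis
  proof cases
    case 1
    then show ?thesis using INF_dist_via_subset_start[OF ext_metric_C _ _ v, of "B \<inter> C" u] u by auto
  next
    case 2
    then show ?thesis using INF_dist_via_subset_end[OF ext_metric_B _ u, of "B \<inter> C" v] v by auto
  qed (rule cross_BC)
qed

lemma dist_sym: "x \<in> B \<union> C \<Longrightarrow> y \<in> B \<union> C \<Longrightarrow> d x y = d y x"
proof -
  have cross_pair: "d x y = d y x" if x: "x \<in> B - C" and y: "y \<in> C - B" for x y
  proof -
    have "d x y = (INF a\<in>B \<inter> C. d x a + d a y)" by (rule cross_BC[OF x y])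
    also have "\<dots> = (INF a\<in>B \<inter> C. d y a + d a x)"
    proof (rule INF_cong[OF refl])
      fix a assume "a \<in> B \<inter> C"
      then have "d x a = d a x" "d a y = d y a"
        using ext_metric_sym[OF ext_metric_B, of x a] ext_metric_sym[OF ext_metric_C, of a y] x y by auto
      then show "d x a + d a y = d y a + d a x" by (simp add: add.commute)
    qed
    also have "\<dots> = d y x" by (rule cross_CB[OF y x, symmetric])
    finally show ?thesis .
  qed
  assume "x \<in> B \<union> C" "y \<in> B \<union> C"
  then consider "x \<in> B" "y \<in> B" | "x \<in> C" "y \<in> C" | "x \<in> B - C" "y \<in> C - B"
    | "x \<in> C - B" "y \<in> B - C" by blast
  then show "d x y = d y x"
  proof cases
    case 1 then show ?thesis by (rule ext_metric_sym[OF ext_metric_B])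
  next
    case 2 then show ?thesis by (rule ext_metric_sym[OF ext_metric_C])
  next
    case 3 then show ?thesis by (rule cross_pair)
  next
    case 4 then show ?thesis using cross_pair[OF 4(2,1)] by simp
  qed
qed

lemma cross_from_C:
  assumes "u \<in> C" "v \<in> B"
  shows "d u v = (INF a\<in>B \<inter> C. d u a + d a v)"
proof -
  interpret swapped: forest_gluing C B d by (rule swap)
  show ?thesis using swapped.cross[OF assms] by (simp add: Int_commute)
qed

lemma eq_0_cross:
  assumes x: "x \<in> B" and y: "y \<in> C" and xy: "d x y = 0"
  shows "x = y"
proof -
  have close: "\<exists>a\<in>B \<inter> C. d x a < ennreal e \<and> d a y < ennreal e" if "0 < e" for e :: real
  proof -
    have "(INF a\<in>B \<inter> C. d x a + d a y) < ennreal e" using cross[OF x y] xy that by simp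
    then obtain a where a: "a \<in> B \<inter> C" "d x a + d a y < ennreal e" by (auto simp: INF_less_iff)
    have "d x a \<le> d x a + d a y" "d a y \<le> d x a + d a y" by simp_all
    then show ?thesis using a by (meson le_less_trans)
  qed
  have "x \<in> B \<inter> C"
  proof (rule ext_complete_subset_closed[OF ext_metric_B _ r_forest_complete[OF forest_A] x])
    show "\<exists>a\<in>B \<inter> C. d x a < ennreal e" if "0 < e" for e :: real using close[OF that] by blast
  qed blast
  moreover have "y \<in> B \<inter> C"
  proof (rule ext_complete_subset_closed[OF ext_metric_C _ r_forest_complete[OF forest_A] y])
    show "\<exists>a\<in>B \<inter> C. d y a < ennreal e" if e: "0 < e" for e :: real
    proof -
      obtain a where a: "a \<in> B \<inter> C" "d a y < ennreal e" using close[OF e] by blast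
      then have "d y a < ennreal e" using ext_metric_sym[OF ext_metric_C, of y a] y by auto
      then show ?thesis using a(1) by blast
    qed
  qed blast
  ultimately show ?thesis using ext_metric_eq_0[OF ext_metric_B] xy by blast
qed


lemma dist_le_via_A:
  assumes "x \<in> B" "z \<in> C" "a \<in> B \<inter> C"
  shows "d x z \<le> d x a + d a z"
  unfolding cross[OF assms(1,2)] using assms(3) by (rule INF_lower)

lemma triangle_from_B:
  assumes x: "x \<in> B" and y: "y \<in> B \<union> C" and z: "z \<in> B \<union> C"
  shows "d x z \<le> d x y + d y z"
proof -
  note tri_B = ext_metric_triangle[OF ext_metric_B] and tri_C = ext_metric_triangle[OF ext_metric_C]
  consider "y \<in> B" "z \<in> B" | "y \<in> B" "z \<in> C" | "y \<in> C" "z \<in> C" | "y \<in> C" "z \<in> B"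
    using y z by blast
  then show ?thesis
  proof cases
    case 1
    then show ?thesis using tri_B[OF x] by blast
  next
    case 2
    have "d x z \<le> d x y + (d y a + d a z)" if a: "a \<in> B \<inter> C" for a
      using dist_le_via_A[OF x 2(2) a] tri_B[OF x 2(1), of a] a
      by (metis add.assoc add_right_mono IntD1 order_trans)
    then have "d x z \<le> d x y + (INF a\<in>B \<inter> C. d y a + d a z)"
      unfolding INF_ennreal_const_add_on[symmetric] by (rule INF_greatest)
    then show ?thesis using cross[OF 2] by simp
  next
    case 3
    have "d x z \<le> (d x a + d a y) + d y z" if a: "a \<in> B \<inter> C" for a
      using dist_le_via_A[OF x 3(2) a] tri_C[OF _ 3, of a] a
      by (metis add.assoc add_left_mono IntD2 order_trans)
    then have "d x z \<le> (INF a\<in>B \<inter> C. d x a + d a y) + d y z"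
      unfolding INF_ennreal_add_const_on[symmetric] by (rule INF_greatest)
    then show ?thesis using cross[OF x 3(1)] by simp
  next
    case 4
    have "d x z \<le> (INF a\<in>B \<inter> C. d x a + d a y) + (INF a\<in>B \<inter> C. d y a + d a z)"
    proof (rule le_INF_add_INF)
      fix a a' assume a: "a \<in> B \<inter> C" and a': "a' \<in> B \<inter> C"
      have "d x z \<le> d x a + d a z" using tri_B[OF x _ 4(2)] a by blast
      also have "d a z \<le> d a a' + d a' z" using tri_B[OF _ _ 4(2)] a a' by blast
      also have "d a a' \<le> d a y + d y a'" using tri_C[OF _ 4(1)] a a' by blast
      finally show "d x z \<le> d x a + d a y + (d y a' + d a' z)"
        by (simp add: add.assoc add_right_mono add_left_mono)
    qed
    also have "\<dots> = d x y + d y z" using cross[OF x 4(1)] cross_from_C[OF 4] by simp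
    finally show ?thesis .
  qed
qed

lemma ext_metric_union: "ext_metric (B \<union> C) d"
  unfolding ext_metric_def
proof (intro conjI ballI)
  interpret swapped: forest_gluing C B d by (rule swap)
  fix x y assume x: "x \<in> B \<union> C" and y: "y \<in> B \<union> C"
  show "d x y = d y x" by (rule dist_sym[OF x y])
  show "d x y = 0 \<longleftrightarrow> x = y"
  proof
    assume xy: "d x y = 0"
    consider "x \<in> B" "y \<in> B" | "x \<in> C" "y \<in> C" | "x \<in> B" "y \<in> C" | "x \<in> C" "y \<in> B"
      using x y by blast
    then show "x = y"
    proof cases
      case 1 then show ?thesis using ext_metric_eq_0[OF ext_metric_B _ _ xy] by blast
    next
      case 2 then show ?thesis using ext_metric_eq_0[OF ext_metric_C _ _ xy] by blast
    next
      case 3 then show ?thesis using eq_0_cross[OF _ _ xy] by blast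
    next
      case 4 then show ?thesis using swapped.eq_0_cross[OF _ _ xy] by blast
    qed
  next
    assume "x = y"
    then show "d x y = 0" using x ext_metric_refl[OF ext_metric_B] ext_metric_refl[OF ext_metric_C] by blast
  qed
  fix z assume z: "z \<in> B \<union> C"
  show "d x z \<le> d x y + d y z"
  proof (cases "x \<in> B")
    case True then show ?thesis by (rule triangle_from_B[OF _ y z])
  next
    case False
    then have "x \<in> C" using x by blast
    then show ?thesis using swapped.triangle_from_B[of x y z] y z by (simp add: Un_commute)
  qed
qed

lemma complete_union: "ext_complete (B \<union> C) d"
  unfolding ext_complete_def
proof (intro allI impI; elim conjE)
  fix s assume s: "\<forall>n. s n \<in> B \<union> C" and cauchy: "ext_cauchy d s"
  have "(\<forall>N. \<exists>n\<ge>N. s n \<in> B) \<or> (\<forall>N. \<exists>n\<ge>N. s n \<in> C)"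
    using s by (metis UnE le_cases order_trans)
  then show "\<exists>x\<in>B \<union> C. ext_converges_to d s x"
    using ext_cauchy_frequently_in_complete[OF ext_metric_union _ r_forest_complete[OF forest_B] _ cauchy]
      ext_cauchy_frequently_in_complete[OF ext_metric_union _ r_forest_complete[OF forest_C] _ cauchy]
      s by blast
qed


lemma arc_in_C_between_A_points:
  assumes z: "z \<in> C" and arc: "arc_between (finite_component C d z) d p q G"
    and p: "p \<in> B \<inter> C" and q: "q \<in> B \<inter> C"
  shows "G \<subseteq> B \<inter> C"
proof -
  let ?TC = "finite_component C d z"
  let ?TA = "finite_component (B \<inter> C) d p"
  have pq: "p \<in> ?TC" "q \<in> ?TC" using arc_betweenD[OF arc] by blast+
  have "d p q < \<infinity>" by (rule finite_component_dist_finite[OF ext_metric_C z pq])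
  then have qA: "q \<in> ?TA" using q unfolding finite_component_def by blast
  have pA: "p \<in> ?TA" by (rule self_in_finite_component[OF ext_metric_A p])
  obtain S where S: "arc_between ?TA d p q S"
    by (rule r_tree_arc_exists[OF r_forest_component[OF forest_A p] pA qA])
  have "?TA \<subseteq> finite_component C d p" by (rule finite_component_mono) (rule Int_lower2)
  also have "\<dots> = ?TC" by (rule finite_component_eq[OF ext_metric_C z pq(1)])
  finally have "S \<subseteq> ?TC" using arc_betweenD(3)[OF S] by (rule order_trans[rotated])
  then have "arc_between ?TC d p q S" by (rule arc_between_mono[OF S])
  then have "G = S" by (rule r_tree_arc_unique[OF r_forest_component[OF forest_C z] arc])
  also have "S \<subseteq> ?TA" by (rule arc_betweenD(3)[OF S])
  also have "?TA \<subseteq> B \<inter> C" by (rule finite_component_subset)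
  finally show ?thesis .
qed

lemma closed_path_preimage_sides:
  assumes g: "path_cont_on {a..b} d g" "g ` {a..b} \<subseteq> B \<union> C"
  shows "closed {t\<in>{a..b}. g t \<in> B}" "closed {t\<in>{a..b}. g t \<in> C}"
  by (rule closed_path_preimage_complete[OF g(1) ext_metric_union g(2) Un_upper1 r_forest_complete[OF forest_B]],
      rule closed_path_preimage_complete[OF g(1) ext_metric_union g(2) Un_upper2 r_forest_complete[OF forest_C]])

lemma path_excursion_from_B:
  assumes g: "path_cont_on {a..b} d g" "g ` {a..b} \<subseteq> B \<union> C" "g a \<in> B" "g b \<in> B"
    and \<tau>: "\<tau> \<in> {a..b}" "g \<tau> \<notin> B"
  obtains s t where "a \<le> s" "s < \<tau>" "\<tau> < t" "t \<le> b" "g s \<in> B \<inter> C" "g t \<in> B \<inter> C" "g ` {s..t} \<subseteq> C"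
proof -
  define SB where "SB = {t\<in>{a..b}. g t \<in> B}"
  define SC where "SC = {t\<in>{a..b}. g t \<in> C}"
  have closed: "closed SB" "closed SC" unfolding SB_def SC_def by (rule closed_path_preimage_sides[OF g(1,2)])+
  have ends: "a \<in> SB" "b \<in> SB" "a \<le> \<tau>" "\<tau> \<le> b" "\<tau> \<notin> SB" unfolding SB_def using g(3,4) \<tau> by auto
  obtain s t where st: "s \<in> SB" "t \<in> SB" "s < \<tau>" "\<tau> < t"
    and gap: "\<And>u. s < u \<Longrightarrow> u < t \<Longrightarrow> u \<notin> SB"
    using closed_gap_around[OF closed(1) ends] by metis
  have st_ab: "a \<le> s" "t \<le> b" using st(1,2) unfolding SB_def by auto
  have "{s<..<t} \<subseteq> SC"
  proof
    fix u assume u: "u \<in> {s<..<t}"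
    then have "u \<in> {a..b}" using st_ab by auto
    moreover have "g u \<in> B \<union> C" using g(2) calculation by blast
    ultimately show "u \<in> SC" using gap[of u] u unfolding SB_def SC_def by auto
  qed
  then have "closure {s<..<t} \<subseteq> SC" by (rule closure_minimal[OF _ closed(2)])
  then have "{s..t} \<subseteq> SC" using st(3,4) by simp
  then have "g ` {s..t} \<subseteq> C" unfolding SC_def by auto
  moreover have "g s \<in> B \<inter> C" "g t \<in> B \<inter> C"
    using calculation st(1-4) unfolding SB_def by auto
  ultimately show ?thesis using that st_ab st(3,4) by blast
qed

lemma path_first_entry_into_B:
  assumes g: "path_cont_on {a..b} d g" "g ` {a..b} \<subseteq> B \<union> C" "a \<le> b" "g a \<notin> B" "g b \<in> B"
  obtains s where "a < s" "s \<le> b" "g s \<in> B \<inter> C" "g ` {a..s} \<subseteq> C" "\<And>t. a \<le> t \<Longrightarrow> t < s \<Longrightarrow> g t \<notin> B"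
proof -
  define SB where "SB = {t\<in>{a..b}. g t \<in> B}"
  define SC where "SC = {t\<in>{a..b}. g t \<in> C}"
  have closed: "closed SB" "closed SC" unfolding SB_def SC_def by (rule closed_path_preimage_sides[OF g(1,2)])+
  have bdd: "bdd_below SB" unfolding SB_def by (rule bdd_belowI[of _ a]) auto
  have "b \<in> SB" unfolding SB_def using g(3,5) by auto
  then have "Inf SB \<in> SB" using closed_contains_Inf[OF _ bdd closed(1)] by blast
  define s where "s = Inf SB"
  have s: "a \<le> s" "s \<le> b" "g s \<in> B" using \<open>Inf SB \<in> SB\<close> unfolding s_def SB_def by auto
  have before: "g t \<notin> B" if "a \<le> t" "t < s" for t
  proof
    assume "g t \<in> B"
    then have "t \<in> SB" unfolding SB_def using that s(2) by auto
    then have "s \<le> t" unfolding s_def by (rule cInf_lower[OF _ bdd])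
    then show False using that(2) by simp
  qed
  have "s \<noteq> a" using s(3) g(4) by auto
  then have as: "a < s" using s(1) by simp
  have "{a..<s} \<subseteq> SC"
  proof
    fix t assume t: "t \<in> {a..<s}"
    then have "t \<in> {a..b}" using s(2) by auto
    moreover from this have "g t \<in> B \<union> C" using g(2) by blast
    ultimately show "t \<in> SC" using before[of t] t unfolding SC_def by auto
  qed
  then have "closure {a..<s} \<subseteq> SC" by (rule closure_minimal[OF _ closed(2)])
  then have "{a..s} \<subseteq> SC" using as by simp
  then have sub: "g ` {a..s} \<subseteq> C" unfolding SC_def by auto
  then have "g s \<in> B \<inter> C" using as s(3) by auto
  then show ?thesis using that[OF as s(2) _ sub before] by blast
qed

lemma arc_between_B_points_in_B:
  assumes x: "x \<in> B \<union> C" and arc: "arc_between (finite_component (B \<union> C) d x) d p q G"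
    and p: "p \<in> B" and q: "q \<in> B"
  shows "G \<subseteq> B"
proof (rule ccontr)
  let ?T = "finite_component (B \<union> C) d x"
  obtain a b g where g: "a \<le> b" "g ` {a..b} = G" "G \<subseteq> ?T" "inj_on g {a..b}"
    "path_cont_on {a..b} d g" "g a = p" "g b = q"
    by (rule arc_betweenE[OF arc])
  have gN: "g ` {a..b} \<subseteq> B \<union> C"
    unfolding g(2) using g(3) finite_component_subset by (rule order_trans)
  assume "\<not> G \<subseteq> B"
  then have "\<exists>\<tau>\<in>{a..b}. g \<tau> \<notin> B" unfolding g(2)[symmetric] image_subset_iff by blast
  then obtain \<tau> where \<tau>: "\<tau> \<in> {a..b}" "g \<tau> \<notin> B" by blast
  obtain s t where st: "a \<le> s" "s < \<tau>" "\<tau> < t" "t \<le> b" "g s \<in> B \<inter> C" "g t \<in> B \<inter> C"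
    and sub: "g ` {s..t} \<subseteq> C"
    using path_excursion_from_B[OF g(5) gN _ _ \<tau>] g(6,7) p q by metis
  have "g ` {s..t} \<subseteq> finite_component C d (g s)"
  proof
    fix w assume "w \<in> g ` {s..t}"
    then obtain u where u: "u \<in> {s..t}" "w = g u" by blast
    have "g s \<in> G" "g u \<in> G" unfolding g(2)[symmetric] using u(1) st by auto
    then have "g s \<in> ?T" "g u \<in> ?T" using g(3) by blast+
    then have "d (g s) w < \<infinity>" using finite_component_dist_finite[OF ext_metric_union x] u(2) by blast
    moreover have "w \<in> C" using sub u by blast
    ultimately show "w \<in> finite_component C d (g s)" unfolding finite_component_def by blast
  qed
  then have "arc_between (finite_component C d (g s)) d (g s) (g t) (g ` {s..t})"
    using st(2,3) by (intro arc_between_subpath[OF g(5,4) st(1) _ st(4)]) simp_all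
  moreover have "g s \<in> C" using st(5) by blast
  ultimately have "g ` {s..t} \<subseteq> B \<inter> C" using arc_in_C_between_A_points st(5,6) by blast
  moreover have "g \<tau> \<in> g ` {s..t}" using st(2,3) by auto
  ultimately show False using \<tau>(2) by blast
qed

lemma B_points_unique_isometric_arc:
  assumes x: "x \<in> B \<union> C"
    and p: "p \<in> finite_component (B \<union> C) d x" "p \<in> B"
    and q: "q \<in> finite_component (B \<union> C) d x" "q \<in> B"
  shows "\<exists>G. (\<forall>G'. arc_between (finite_component (B \<union> C) d x) d p q G' \<longleftrightarrow> G' = G)
    \<and> isometric_segment d G"
proof -
  let ?T = "finite_component (B \<union> C) d x"
  let ?TB = "finite_component B d p"
  have tree: "r_tree ?TB d" by (rule r_forest_component[OF forest_B p(2)])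
  have "d p q < \<infinity>" by (rule finite_component_dist_finite[OF ext_metric_union x p(1) q(1)])
  then have qB: "q \<in> ?TB" using q(2) unfolding finite_component_def by blast
  obtain G where G: "arc_between ?TB d p q G"
    by (rule r_tree_arc_exists[OF tree self_in_finite_component[OF ext_metric_B p(2)] qB])
  have "?TB \<subseteq> finite_component (B \<union> C) d p" by (rule finite_component_mono) blast
  also have "\<dots> = ?T" by (rule finite_component_eq[OF ext_metric_union x p(1)])
  finally have TB_T: "?TB \<subseteq> ?T" .
  have "arc_between ?T d p q G' \<longleftrightarrow> G' = G" for G'
  proof
    assume G': "arc_between ?T d p q G'"
    have "G' \<subseteq> ?TB"
    proof
      fix w assume w: "w \<in> G'"
      then have "w \<in> B" using arc_between_B_points_in_B[OF x G' p(2) q(2)] by blast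
      moreover have "d p w < \<infinity>"
        using finite_component_dist_finite[OF ext_metric_union x p(1)] arc_betweenD(3)[OF G'] w by blast
      ultimately show "w \<in> ?TB" unfolding finite_component_def by blast
    qed
    then show "G' = G" using r_tree_arc_unique[OF tree _ G] arc_between_mono[OF G'] by blast
  next
    assume "G' = G"
    then show "arc_between ?T d p q G'" using arc_between_mono[OF G] arc_betweenD(3)[OF G] TB_T by blast
  qed
  then show ?thesis using r_tree_arc_isometric_segment[OF tree G] by (intro exI[of _ G]) simp
qed


definition gate :: "'a \<Rightarrow> 'a \<Rightarrow> bool" where
  "gate x p \<longleftrightarrow> p \<in> B \<inter> C \<and> p \<in> finite_component C d x \<and>
    (\<forall>G. arc_between (finite_component C d x) d x p G \<longrightarrow> G \<inter> (B \<inter> C) \<subseteq> {p})"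

lemma gateI:
  assumes x: "x \<in> C" and p: "p \<in> B \<inter> C" and G: "arc_between (finite_component C d x) d x p G"
    and meet: "G \<inter> (B \<inter> C) \<subseteq> {p}"
  shows "gate x p"
  unfolding gate_def
  using p arc_betweenD(2,3)[OF G] r_tree_arc_unique[OF r_forest_component[OF forest_C x] _ G] meet
  by blast

lemma gate_exists:
  assumes x: "x \<in> C" and a: "a \<in> B \<inter> C" "d x a < \<infinity>"
  obtains p where "gate x p"
proof -
  let ?TC = "finite_component C d x"
  have tree: "r_tree ?TC d" by (rule r_forest_component[OF forest_C x])
  have xT: "x \<in> ?TC" by (rule self_in_finite_component[OF ext_metric_C x])
  have aT: "a \<in> ?TC" using a unfolding finite_component_def by blast
  obtain G where G: "arc_between ?TC d x a G" by (rule r_tree_arc_exists[OF tree xT aT])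
  obtain p G' where p: "p \<in> B \<inter> C" "arc_between ?TC d x p G'" "G' \<inter> (B \<inter> C) \<subseteq> {p}"
    by (rule r_tree_first_point_on_arc[OF tree G ext_metric_C finite_component_subset Int_lower2
          r_forest_complete[OF forest_A] a(1)])
  have "gate x p" by (rule gateI[OF x p])
  then show ?thesis by (rule that)
qed

lemma gate_unique:
  assumes x: "x \<in> C" and p: "gate x p" and p': "gate x p'"
  shows "p = p'"
proof (rule ccontr)
  assume ne: "p \<noteq> p'"
  let ?TC = "finite_component C d x"
  have tree: "r_tree ?TC d" by (rule r_forest_component[OF forest_C x])
  have xT: "x \<in> ?TC" by (rule self_in_finite_component[OF ext_metric_C x])
  have pp: "p \<in> B \<inter> C" "p \<in> ?TC" "p' \<in> B \<inter> C" "p' \<in> ?TC" using p p' unfolding gate_def by auto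
  obtain Gp where Gp: "arc_between ?TC d x p Gp" by (rule r_tree_arc_exists[OF tree xT pp(2)])
  obtain S where S: "arc_between ?TC d p p' S" by (rule r_tree_arc_exists[OF tree pp(2,4)])
  have "S \<subseteq> B \<inter> C" by (rule arc_in_C_between_A_points[OF x S pp(1,3)])
  moreover have "Gp \<inter> (B \<inter> C) \<subseteq> {p}" using p Gp unfolding gate_def by blast
  ultimately have "Gp \<inter> S \<subseteq> {p}" by blast
  then have "arc_between ?TC d x p' (Gp \<union> S)" by (rule r_tree_arc_concat[OF tree Gp S])
  then have "(Gp \<union> S) \<inter> (B \<inter> C) \<subseteq> {p'}" using p' unfolding gate_def by blast
  moreover have "p \<in> Gp" by (rule arc_betweenD(2)[OF Gp])
  ultimately show False using pp(1) ne by blast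
qed

lemma dist_to_A_through_gate:
  assumes x: "x \<in> C" and p: "gate x p" and G: "arc_between (finite_component C d x) d x p G"
    and u: "u \<in> G" and a: "a \<in> B \<inter> C" "d u a < \<infinity>"
  shows "d u a = d u p + d p a"
proof -
  let ?TC = "finite_component C d x"
  have tree: "r_tree ?TC d" by (rule r_forest_component[OF forest_C x])
  have uT: "u \<in> ?TC" using arc_betweenD(3)[OF G] u by blast
  have pp: "p \<in> B \<inter> C" "p \<in> ?TC" using p unfolding gate_def by auto
  have "d x u < \<infinity>" "u \<in> C" using uT unfolding finite_component_def by auto
  then have "d x a < \<infinity>" using ext_metric_finite_trans[OF ext_metric_C x _ _ _ a(2)] a(1) by blast
  then have aT: "a \<in> ?TC" using a(1) unfolding finite_component_def by blast
  obtain Gu where Gu: "arc_between ?TC d u p Gu" "Gu \<subseteq> G" by (rule r_tree_subarc_to_end[OF tree G u])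
  obtain S where S: "arc_between ?TC d p a S" by (rule r_tree_arc_exists[OF tree pp(2) aT])
  have "S \<subseteq> B \<inter> C" by (rule arc_in_C_between_A_points[OF x S pp(1) a(1)])
  moreover have "G \<inter> (B \<inter> C) \<subseteq> {p}" using p G unfolding gate_def by blast
  ultimately have "Gu \<inter> S \<subseteq> {p}" using Gu(2) by blast
  then show ?thesis by (rule r_tree_dist_concat[OF tree Gu(1) S])
qed

lemma dist_through_gate:
  assumes x: "x \<in> C" and p: "gate x p" and G: "arc_between (finite_component C d x) d x p G"
    and u: "u \<in> G" and v: "v \<in> B"
  shows "d u v = d u p + d p v"
proof (rule antisym)
  have "G \<subseteq> C" using arc_betweenD(3)[OF G] finite_component_subset by (rule order_trans)
  then have uC: "u \<in> C" using u by blast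
  have pB: "p \<in> B" "p \<in> B \<inter> C" using p unfolding gate_def by auto
  show "d u v \<le> d u p + d p v"
    by (rule ext_metric_triangle[OF ext_metric_union]) (use uC pB v in auto)
  have "d u p + d p v \<le> d u a + d a v" if a: "a \<in> B \<inter> C" for a
  proof (cases "d u a < \<infinity>")
    case False
    then have "d u a = \<infinity>" by (simp add: less_top[symmetric])
    then show ?thesis by simp
  next
    case True
    have "d p v \<le> d p a + d a v" using ext_metric_triangle[OF ext_metric_B pB(1) _ v] a by blast
    then have "d u p + d p v \<le> d u p + (d p a + d a v)" by (rule add_left_mono)
    also have "\<dots> = d u a + d a v"
      using dist_to_A_through_gate[OF x p G u a True] by (simp add: add.assoc)
    finally show ?thesis .
  qed
  then have "d u p + d p v \<le> (INF a\<in>B \<inter> C. d u a + d a v)" by (rule INF_greatest)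
  also have "\<dots> = d u v" by (rule cross_from_C[OF uC v, symmetric])
  finally show "d u p + d p v \<le> d u v" .
qed


lemma isometric_arc_through_gate:
  assumes x: "x \<in> C" and p: "gate x p"
    and G1: "arc_between (finite_component C d x) d x p G1"
    and G2: "arc_between (finite_component B d p) d p y G2"
  shows "arc_between (finite_component (B \<union> C) d x) d x y (G1 \<union> G2)"
    and "isometric_segment d (G1 \<union> G2)"
proof -
  let ?T = "finite_component (B \<union> C) d x"
  have pB: "p \<in> B" using p unfolding gate_def by auto
  have "finite_component C d x \<subseteq> ?T" by (rule finite_component_mono) (rule Un_upper2)
  then have G1T: "G1 \<subseteq> ?T" using arc_betweenD(3)[OF G1] by (rule order_trans[rotated])
  have "finite_component B d p \<subseteq> finite_component (B \<union> C) d p"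
    by (rule finite_component_mono) (rule Un_upper1)
  also have "\<dots> = ?T"
  proof (rule finite_component_eq[OF ext_metric_union])
    show "x \<in> B \<union> C" using x by blast
    show "p \<in> ?T" using G1T arc_betweenD(2)[OF G1] by blast
  qed
  finally have G2T: "G2 \<subseteq> ?T" using arc_betweenD(3)[OF G2] by (rule order_trans[rotated])
  have G2B: "G2 \<subseteq> B" using arc_betweenD(3)[OF G2] finite_component_subset by (rule order_trans)
  note join = r_tree_isometric_arc_join[OF ext_metric_subset[OF ext_metric_union finite_component_subset]
      r_forest_component[OF forest_C x] G1 r_forest_component[OF forest_B pB] G2 G1T G2T]
  show "arc_between ?T d x y (G1 \<union> G2)" "isometric_segment d (G1 \<union> G2)"
    by (rule join; use dist_through_gate[OF x p G1] G2B in blast)+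
qed

lemma arc_enters_B_at_gate:
  assumes x: "x \<in> C" "x \<notin> B" and y: "y \<in> B"
    and G: "arc_between (finite_component (B \<union> C) d x) d x y G"
  obtains p G1 G2 where "gate x p" "arc_between (finite_component C d x) d x p G1"
    "arc_between (finite_component (B \<union> C) d x) d p y G2" "G = G1 \<union> G2"
proof -
  let ?T = "finite_component (B \<union> C) d x"
  let ?TC = "finite_component C d x"
  obtain a b g where g: "a \<le> b" "g ` {a..b} = G" "G \<subseteq> ?T" "inj_on g {a..b}"
    "path_cont_on {a..b} d g" "g a = x" "g b = y"
    by (rule arc_betweenE[OF G])
  have gN: "g ` {a..b} \<subseteq> B \<union> C"
    unfolding g(2) using g(3) finite_component_subset by (rule order_trans)
  obtain s where s: "a < s" "s \<le> b" "g s \<in> B \<inter> C" "g ` {a..s} \<subseteq> C"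
    and before: "\<And>t. a \<le> t \<Longrightarrow> t < s \<Longrightarrow> g t \<notin> B"
    using path_first_entry_into_B[OF g(5) gN g(1)] g(6,7) x(2) y by metis
  have GsT: "g ` {a..s} \<subseteq> ?T" "g ` {s..b} \<subseteq> ?T"
    using g(3) s(1,2) unfolding g(2)[symmetric] by auto
  have "g ` {a..s} \<subseteq> ?TC"
  proof
    fix w assume w: "w \<in> g ` {a..s}"
    then have "d x w < \<infinity>" using GsT(1) unfolding finite_component_def by blast
    then show "w \<in> ?TC" using s(4) w unfolding finite_component_def by blast
  qed
  then have arc1: "arc_between ?TC d x (g s) (g ` {a..s})"
    using arc_between_subpath[OF g(5,4) order_refl _ s(2)] g(6) s(1) by simp
  moreover have "gate x (g s)"
  proof (rule gateI[OF x(1) s(3) arc1])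
    show "g ` {a..s} \<inter> (B \<inter> C) \<subseteq> {g s}"
    proof
      fix w assume "w \<in> g ` {a..s} \<inter> (B \<inter> C)"
      then obtain t where t: "t \<in> {a..s}" "w = g t" "g t \<in> B" by blast
      then have "\<not> t < s" using before[of t] by auto
      then show "w \<in> {g s}" using t by simp
    qed
  qed
  moreover have "arc_between ?T d (g s) y (g ` {s..b})"
    using arc_between_subpath[OF g(5,4) _ s(2) order_refl GsT(2)] g(7) s(1) by simp
  moreover have "G = g ` {a..s} \<union> g ` {s..b}"
  proof -
    have "{a..b} = {a..s} \<union> {s..b}" using s(1,2) by auto
    then show ?thesis unfolding g(2)[symmetric] by (simp only: image_Un)
  qed
  ultimately show ?thesis using arc1 that by blast
qed

lemma arc_through_gate_unique:
  assumes x: "x \<in> C" "x \<notin> B" and y: "y \<in> B" and p: "gate x p"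
    and G1: "arc_between (finite_component C d x) d x p G1"
    and G2: "arc_between (finite_component B d p) d p y G2"
    and G: "arc_between (finite_component (B \<union> C) d x) d x y G"
  shows "G = G1 \<union> G2"
proof -
  let ?T = "finite_component (B \<union> C) d x"
  obtain p' G1' G2' where p': "gate x p'" and G1': "arc_between (finite_component C d x) d x p' G1'"
    and G2': "arc_between ?T d p' y G2'" and G': "G = G1' \<union> G2'"
    by (rule arc_enters_B_at_gate[OF x y G])
  have "p' = p" by (rule gate_unique[OF x(1) p' p])
  then have G2p: "arc_between ?T d p y G2'" using G2' by simp
  have "G1' = G1"
    using G1' unfolding \<open>p' = p\<close> by (rule r_tree_arc_unique[OF r_forest_component[OF forest_C x(1)] _ G1])
  have pB: "p \<in> B" using p unfolding gate_def by blast
  have xN: "x \<in> B \<union> C" using x(1) by blast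
  have "G2' \<subseteq> finite_component B d p"
  proof
    fix w assume w: "w \<in> G2'"
    have "G2' \<subseteq> B" by (rule arc_between_B_points_in_B[OF xN G2p pB y])
    then have "w \<in> B" using w by blast
    moreover have "p \<in> ?T" "w \<in> ?T" using arc_betweenD(1,3)[OF G2p] w by blast+
    then have "d p w < \<infinity>" by (rule finite_component_dist_finite[OF ext_metric_union xN])
    ultimately show "w \<in> finite_component B d p" unfolding finite_component_def by blast
  qed
  then have "arc_between (finite_component B d p) d p y G2'" by (rule arc_between_mono[OF G2p])
  then have "G2' = G2" by (rule r_tree_arc_unique[OF r_forest_component[OF forest_B pB] _ G2])
  then show ?thesis using G' \<open>G1' = G1\<close> by simp
qed


lemma C_B_points_unique_isometric_arc:
  assumes x: "x \<in> C" "x \<notin> B" and y: "y \<in> finite_component (B \<union> C) d x" "y \<in> B"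
  shows "\<exists>G. (\<forall>G'. arc_between (finite_component (B \<union> C) d x) d x y G' \<longleftrightarrow> G' = G)
    \<and> isometric_segment d G"
proof -
  let ?T = "finite_component (B \<union> C) d x"
  let ?TC = "finite_component C d x"
  have xN: "x \<in> B \<union> C" using x(1) by blast
  have "(INF a\<in>B \<inter> C. d x a + d a y) < \<infinity>"
    using y(1) cross_from_C[OF x(1) y(2)] unfolding finite_component_def by simp
  then obtain a where a: "a \<in> B \<inter> C" "d x a + d a y < \<infinity>" by (auto simp: INF_less_iff)
  have "d x a < \<infinity>" using a(2) le_less_trans[OF le_iff_add[THEN iffD2]] by blast
  then obtain p where p: "gate x p" by (rule gate_exists[OF x(1) a(1)])
  have pB: "p \<in> B" and pC: "p \<in> ?TC" using p unfolding gate_def by auto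
  have "?TC \<subseteq> ?T" by (rule finite_component_mono) (rule Un_upper2)
  then have "p \<in> ?T" using pC by blast
  then have "d p y < \<infinity>" by (rule finite_component_dist_finite[OF ext_metric_union xN _ y(1)])
  then have yB: "y \<in> finite_component B d p" using y(2) unfolding finite_component_def by blast
  obtain G1 where G1: "arc_between ?TC d x p G1"
    by (rule r_tree_arc_exists[OF r_forest_component[OF forest_C x(1)]
          self_in_finite_component[OF ext_metric_C x(1)] pC])
  obtain G2 where G2: "arc_between (finite_component B d p) d p y G2"
    by (rule r_tree_arc_exists[OF r_forest_component[OF forest_B pB]
          self_in_finite_component[OF ext_metric_B pB] yB])
  have "arc_between ?T d x y G' \<longleftrightarrow> G' = G1 \<union> G2" for G'
    using arc_through_gate_unique[OF x y(2) p G1 G2] isometric_arc_through_gate(1)[OF x(1) p G1 G2]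
    by blast
  then show ?thesis using isometric_arc_through_gate(2)[OF x(1) p G1 G2] by (intro exI[of _ "G1 \<union> G2"]) simp
qed

lemma r_tree_component_union:
  assumes x0: "x0 \<in> B \<union> C"
  shows "r_tree (finite_component (B \<union> C) d x0) d"
proof (rule r_treeI)
  let ?T = "finite_component (B \<union> C) d x0"
  show "ext_metric ?T d" by (rule ext_metric_subset[OF ext_metric_union finite_component_subset])
  show "d x y < \<infinity>" if "x \<in> ?T" "y \<in> ?T" for x y
    by (rule finite_component_dist_finite[OF ext_metric_union x0 that])
  show "ext_complete ?T d" by (rule ext_complete_finite_component[OF ext_metric_union complete_union x0])
  fix x y assume x: "x \<in> ?T" and y: "y \<in> ?T"
  interpret swapped: forest_gluing C B d by (rule swap)
  have xN: "x \<in> B \<union> C" using finite_component_subset x by (rule subsetD)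
  have T: "?T = finite_component (B \<union> C) d x" by (rule finite_component_eq[OF ext_metric_union x0 x, symmetric])
  have xT: "x \<in> finite_component (B \<union> C) d x" by (rule self_in_finite_component[OF ext_metric_union xN])
  have yT: "y \<in> finite_component (B \<union> C) d x" using y T by simp
  have yN: "y \<in> B \<union> C" using finite_component_subset y by (rule subsetD)
  consider "x \<in> B" "y \<in> B" | "x \<in> C" "y \<in> C" | "x \<in> C - B" "y \<in> B" | "x \<in> B - C" "y \<in> C"
    using xN yN by blast
  then have "\<exists>G. (\<forall>G'. arc_between (finite_component (B \<union> C) d x) d x y G' \<longleftrightarrow> G' = G)
    \<and> isometric_segment d G"
  proof cases
    case 1
    then show ?thesis by (rule B_points_unique_isometric_arc[OF xN xT _ yT])
  next
    case 2
    then show ?thesis using swapped.B_points_unique_isometric_arc[of x x y] xN xT yT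
      by (simp add: Un_commute)
  next
    case 3
    then show ?thesis using C_B_points_unique_isometric_arc[OF _ _ yT] by simp
  next
    case 4
    then show ?thesis using swapped.C_B_points_unique_isometric_arc[of x y] yT
      by (simp add: Un_commute)
  qed
  then show "\<exists>G. (\<forall>G'. arc_between ?T d x y G' \<longleftrightarrow> G' = G) \<and> isometric_segment d G"
    unfolding T .
qed

lemma r_forest_union: "r_forest (B \<union> C) d"
  unfolding r_forest_def
proof (intro conjI ballI)
  show "ext_metric (B \<union> C) d" by (rule ext_metric_union)
  show "ext_complete (B \<union> C) d" by (rule complete_union)
  fix x assume "x \<in> B \<union> C"
  then show "r_tree {y \<in> B \<union> C. d x y < \<infinity>} d"
    using r_tree_component_union unfolding finite_component_def by simp
qed

end

section \<open>Extending 1-1-Lipschitz predicates\<close>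

lemma enn2real_min_1_dist:
  fixes a b \<delta> :: ennreal
  assumes "a \<le> b + \<delta>" "b \<le> a + \<delta>"
  shows "ennreal \<bar>enn2real (min 1 a) - enn2real (min 1 b)\<bar> \<le> \<delta>"
proof (cases "\<delta> = \<infinity>")
  case False
  have min_le: "min 1 a \<le> min 1 b + \<delta>" if "a \<le> b + \<delta>" for a b :: ennreal
    using that by (cases "b \<le> 1") (auto simp: min_def add_increasing2)
  obtain r where r: "\<delta> = ennreal r" "0 \<le> r" using False by (cases \<delta> rule: ennreal_cases) auto
  obtain p where p: "min 1 a = ennreal p" "0 \<le> p"
    by (cases "min 1 a" rule: ennreal_cases) (auto simp: min_def split: if_splits)
  obtain q where q: "min 1 b = ennreal q" "0 \<le> q"
    by (cases "min 1 b" rule: ennreal_cases) (auto simp: min_def split: if_splits)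
  have "ennreal p \<le> ennreal q + ennreal r" "ennreal q \<le> ennreal p + ennreal r"
    using min_le[OF assms(1)] min_le[OF assms(2)] p(1) q(1) r(1) by simp_all
  then have "ennreal p \<le> ennreal (q + r)" "ennreal q \<le> ennreal (p + r)"
    by (simp_all only: ennreal_plus[OF q(2) r(2)] ennreal_plus[OF p(2) r(2)])
  then have "p \<le> q + r" "q \<le> p + r"
    using ennreal_le_iff[OF add_nonneg_nonneg[OF q(2) r(2)], of p]
      ennreal_le_iff[OF add_nonneg_nonneg[OF p(2) r(2)], of q] by blast+
  then have "\<bar>p - q\<bar> \<le> r" by linarith
  then show ?thesis using p q r by (simp add: ennreal_leI)
qed (simp add: infinity_ennreal_def)

text \<open>McShane extension of R from K for the metric d x u + d y v on pairs, truncated at 1.\<close>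

definition mcshane_bound :: "('a \<times> 'a) set \<Rightarrow> ('a \<Rightarrow> 'a \<Rightarrow> real) \<Rightarrow> ('a \<Rightarrow> 'a \<Rightarrow> ennreal) \<Rightarrow>
    'a \<Rightarrow> 'a \<Rightarrow> ennreal" where
  "mcshane_bound K R d x y = (INF (u, v)\<in>K. ennreal (R u v) + d x u + d y v)"

definition mcshane_ext :: "('a \<times> 'a) set \<Rightarrow> ('a \<Rightarrow> 'a \<Rightarrow> real) \<Rightarrow> ('a \<Rightarrow> 'a \<Rightarrow> ennreal) \<Rightarrow>
    'a \<Rightarrow> 'a \<Rightarrow> real" where
  "mcshane_ext K R d x y = enn2real (min 1 (mcshane_bound K R d x y))"

lemma mcshane_bound_eq:
  assumes S: "ext_metric S d" and K: "K \<subseteq> S \<times> S" and xy: "(x, y) \<in> K"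
    and nonneg: "\<And>u v. (u, v) \<in> K \<Longrightarrow> 0 \<le> R u v"
    and lip: "\<And>u v u' v'. (u, v) \<in> K \<Longrightarrow> (u', v') \<in> K \<Longrightarrow> ennreal \<bar>R u v - R u' v'\<bar> \<le> d u u' + d v v'"
  shows "mcshane_bound K R d x y = ennreal (R x y)"
proof (rule antisym)
  have "x \<in> S" "y \<in> S" using K xy by auto
  then have "mcshane_bound K R d x y \<le> ennreal (R x y) + d x x + d y y"
    unfolding mcshane_bound_def using xy by (intro INF_lower2[OF xy]) simp
  then show "mcshane_bound K R d x y \<le> ennreal (R x y)"
    using ext_metric_refl[OF S \<open>x \<in> S\<close>] ext_metric_refl[OF S \<open>y \<in> S\<close>] by simp
  show "ennreal (R x y) \<le> mcshane_bound K R d x y"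
    unfolding mcshane_bound_def
  proof (rule INF_greatest, clarify)
    fix u v assume uv: "(u, v) \<in> K"
    have "ennreal (R x y) \<le> ennreal (R u v + \<bar>R x y - R u v\<bar>)" by (rule ennreal_leI) linarith
    also have "\<dots> = ennreal (R u v) + ennreal \<bar>R x y - R u v\<bar>" using nonneg[OF uv] by (simp add: ennreal_plus)
    also have "\<dots> \<le> ennreal (R u v) + (d x u + d y v)" using lip[OF xy uv] by (rule add_left_mono)
    finally show "ennreal (R x y) \<le> ennreal (R u v) + d x u + d y v" by (simp add: add.assoc)
  qed
qed

lemma mcshane_bound_lipschitz:
  assumes S: "ext_metric S d" and K: "K \<subseteq> S \<times> S" and xx': "x \<in> S" "x' \<in> S" and yy': "y \<in> S" "y' \<in> S"
  shows "mcshane_bound K R d x y \<le> mcshane_bound K R d x' y' + (d x x' + d y y')"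
  unfolding mcshane_bound_def
proof (subst INF_ennreal_add_const_on[symmetric], rule INF_mono, clarify)
  fix u v assume uv: "(u, v) \<in> K"
  then have "u \<in> S" "v \<in> S" using K by auto
  then have "d x u \<le> d x x' + d x' u" "d y v \<le> d y y' + d y' v"
    using ext_metric_triangle[OF S] xx' yy' by blast+
  then have "ennreal (R u v) + d x u + d y v \<le> ennreal (R u v) + (d x x' + d x' u) + (d y y' + d y' v)"
    by (intro add_mono) simp_all
  also have "\<dots> = ennreal (R u v) + d x' u + d y' v + (d x x' + d y y')" by (simp add: ac_simps)
  finally have "ennreal (R u v) + d x u + d y v \<le> ennreal (R u v) + d x' u + d y' v + (d x x' + d y y')" .
  then show "\<exists>k\<in>K. (case k of (u, v) \<Rightarrow> ennreal (R u v) + d x u + d y v)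
      \<le> ennreal (R u v) + d x' u + d y' v + (d x x' + d y y')"
    using uv by force
qed

lemma mcshane_ext_eq:
  assumes "ext_metric S d" "K \<subseteq> S \<times> S" "(x, y) \<in> K"
    and R01: "\<And>u v. (u, v) \<in> K \<Longrightarrow> 0 \<le> R u v \<and> R u v \<le> 1"
    and "\<And>u v u' v'. (u, v) \<in> K \<Longrightarrow> (u', v') \<in> K \<Longrightarrow> ennreal \<bar>R u v - R u' v'\<bar> \<le> d u u' + d v v'"
  shows "mcshane_ext K R d x y = R x y"
proof -
  have "mcshane_bound K R d x y = ennreal (R x y)" by (rule mcshane_bound_eq) (use assms in auto)
  then show ?thesis unfolding mcshane_ext_def using R01[OF assms(3)] by (simp add: min_def ennreal_le_1)
qed

lemma lip_1_1_mcshane_ext: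
  assumes S: "ext_metric S d" and K: "K \<subseteq> S \<times> S"
  shows "lip_1_1 S d (mcshane_ext K R d)"
  unfolding lip_1_1_def
proof (intro conjI ballI)
  fix x y assume "x \<in> S" "y \<in> S"
  show "0 \<le> mcshane_ext K R d x y" unfolding mcshane_ext_def by simp
  have "min 1 (mcshane_bound K R d x y) \<le> 1" by simp
  then show "mcshane_ext K R d x y \<le> 1"
    unfolding mcshane_ext_def by (metis enn2real_1 enn2real_mono ennreal_one_less_top)
next
  fix a x y assume axy: "a \<in> S" "x \<in> S" "y \<in> S"
  have dist_yx: "d y x = d x y" by (rule ext_metric_sym[OF S axy(3,2)])
  have "mcshane_bound K R d a x \<le> mcshane_bound K R d a y + d x y"
    "mcshane_bound K R d a y \<le> mcshane_bound K R d a x + d x y"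
    using mcshane_bound_lipschitz[OF S K axy(1,1,2,3)] mcshane_bound_lipschitz[OF S K axy(1,1,3,2)]
      ext_metric_refl[OF S axy(1)] dist_yx by simp_all
  then show "ennreal \<bar>mcshane_ext K R d a x - mcshane_ext K R d a y\<bar> \<le> d x y"
    unfolding mcshane_ext_def by (rule enn2real_min_1_dist)
  have "mcshane_bound K R d x a \<le> mcshane_bound K R d y a + d x y"
    "mcshane_bound K R d y a \<le> mcshane_bound K R d x a + d x y"
    using mcshane_bound_lipschitz[OF S K axy(2,3,1,1)] mcshane_bound_lipschitz[OF S K axy(3,2,1,1)]
      ext_metric_refl[OF S axy(1)] dist_yx by simp_all
  then show "ennreal \<bar>mcshane_ext K R d x a - mcshane_ext K R d y a\<bar> \<le> d x y"
    unfolding mcshane_ext_def by (rule enn2real_min_1_dist)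
qed

lemma lip_1_1_pair_dist:
  assumes "lip_1_1 S d R" "u \<in> S" "v \<in> S" "u' \<in> S" "v' \<in> S"
  shows "ennreal \<bar>R u v - R u' v'\<bar> \<le> d u u' + d v v'"
proof -
  have "ennreal \<bar>R u v - R u' v\<bar> \<le> d u u'" "ennreal \<bar>R u' v - R u' v'\<bar> \<le> d v v'"
    using assms unfolding lip_1_1_def by blast+
  then have "ennreal \<bar>R u v - R u' v\<bar> + ennreal \<bar>R u' v - R u' v'\<bar> \<le> d u u' + d v v'"
    by (rule add_mono)
  moreover have "ennreal \<bar>R u v - R u' v'\<bar> \<le> ennreal \<bar>R u v - R u' v\<bar> + ennreal \<bar>R u' v - R u' v'\<bar>"
    by (simp add: ennreal_plus[symmetric] del: ennreal_plus)
  ultimately show ?thesis by (rule order_trans[rotated])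
qed

context forest_gluing
begin

lemma lip_1_1_pair_dist_union:
  assumes RB: "lip_1_1 B d R" and RC: "lip_1_1 C d R"
    and uv: "(u, v) \<in> B \<times> B \<union> C \<times> C" and uv': "(u', v') \<in> B \<times> B \<union> C \<times> C"
  shows "ennreal \<bar>R u v - R u' v'\<bar> \<le> d u u' + d v v'"
proof -
  have BC: "ennreal \<bar>R u v - R u' v'\<bar> \<le> d u u' + d v v'"
    if uv: "u \<in> B" "v \<in> B" and uv': "u' \<in> C" "v' \<in> C" for u v u' v'
  proof -
    have "ennreal \<bar>R u v - R u' v'\<bar> \<le> (INF a\<in>B \<inter> C. d u a + d a u') + (INF a\<in>B \<inter> C. d v a + d a v')"
    proof (rule le_INF_add_INF)
      fix a a' assume a: "a \<in> B \<inter> C" "a' \<in> B \<inter> C"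
      have "ennreal \<bar>R u v - R u' v'\<bar> \<le> ennreal \<bar>R u v - R a a'\<bar> + ennreal \<bar>R a a' - R u' v'\<bar>"
        by (simp add: ennreal_plus[symmetric] del: ennreal_plus)
      also have "\<dots> \<le> (d u a + d v a') + (d a u' + d a' v')"
        using lip_1_1_pair_dist[OF RB uv(1,2)] lip_1_1_pair_dist[OF RC _ _ uv'] a by (intro add_mono) auto
      also have "\<dots> = d u a + d a u' + (d v a' + d a' v')" by (simp add: ac_simps)
      finally show "ennreal \<bar>R u v - R u' v'\<bar> \<le> d u a + d a u' + (d v a' + d a' v')" .
    qed
    also have "\<dots> = d u u' + d v v'" by (simp only: cross[OF uv(1) uv'(1)] cross[OF uv(2) uv'(2)])
    finally show ?thesis .
  qed
  from uv uv' consider "u \<in> B" "v \<in> B" "u' \<in> B" "v' \<in> B" | "u \<in> C" "v \<in> C" "u' \<in> C" "v' \<in> C"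
    | "u \<in> B" "v \<in> B" "u' \<in> C" "v' \<in> C" | "u \<in> C" "v \<in> C" "u' \<in> B" "v' \<in> B" by blast
  then show ?thesis
  proof cases
    case 1 then show ?thesis by (rule lip_1_1_pair_dist[OF RB])
  next
    case 2 then show ?thesis by (rule lip_1_1_pair_dist[OF RC])
  next
    case 3 then show ?thesis by (rule BC)
  next
    case 4
    then have "ennreal \<bar>R u' v' - R u v\<bar> \<le> d u' u + d v' v" by (intro BC)
    moreover have "d u' u = d u u'" "d v' v = d v v'" using dist_sym 4 by blast+
    ultimately show ?thesis by (simp add: abs_minus_commute)
  qed
qed

lemma lip_1_1_union_extension:
  assumes RB: "lip_1_1 B d R" and RC: "lip_1_1 C d R"
  shows "lip_1_1 (B \<union> C) d (mcshane_ext (B \<times> B \<union> C \<times> C) R d)"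
    and "\<And>x y. (x, y) \<in> B \<times> B \<union> C \<times> C \<Longrightarrow> mcshane_ext (B \<times> B \<union> C \<times> C) R d x y = R x y"
proof -
  have K: "B \<times> B \<union> C \<times> C \<subseteq> (B \<union> C) \<times> (B \<union> C)" by blast
  show "lip_1_1 (B \<union> C) d (mcshane_ext (B \<times> B \<union> C \<times> C) R d)"
    by (rule lip_1_1_mcshane_ext[OF ext_metric_union K])
  fix x y assume xy: "(x, y) \<in> B \<times> B \<union> C \<times> C"
  have R01: "0 \<le> R u v \<and> R u v \<le> 1" if "(u, v) \<in> B \<times> B \<union> C \<times> C" for u v
    using that RB RC unfolding lip_1_1_def by blast
  show "mcshane_ext (B \<times> B \<union> C \<times> C) R d x y = R x y"
    by (rule mcshane_ext_eq[OF ext_metric_union K xy R01 lip_1_1_pair_dist_union[OF RB RC]])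
qed

end

section \<open>Amalgamation and joint embedding\<close>

lemma RFR_model_empty: "RFR_model {} d R"
  unfolding RFR_model_def r_forest_def ext_metric_def ext_complete_def lip_1_1_def by simp

lemma struct_embedding_empty: "struct_embedding {} d R S d' R' f"
  unfolding struct_embedding_def by simp

lemma struct_embedding_inj_on:
  assumes "ext_metric S d" "struct_embedding S d R S' d' R' f" "ext_metric S' d'"
  shows "inj_on f S"
proof (rule isometry_on_inj_on[OF assms(1)])
  show "isometry_on S d d' f" using assms(2) unfolding struct_embedding_def isometry_on_def by blast
qed

locale RFR_amalgamation =
  fixes A :: "'c set" and dA RA and B :: "'d set" and dB RB and C :: "'e set" and dC RC
    and f :: "'c \<Rightarrow> 'd" and g :: "'c \<Rightarrow> 'e"
  assumes model_A: "RFR_model A dA RA" and model_B: "RFR_model B dB RB"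
    and model_C: "RFR_model C dC RC"
    and emb_f: "struct_embedding A dA RA B dB RB f" and emb_g: "struct_embedding A dA RA C dC RC g"
begin

lemma ext_metric_A: "ext_metric A dA"
  using model_A r_forest_ext_metric unfolding RFR_model_def by blast
lemma ext_metric_B: "ext_metric B dB"
  using model_B r_forest_ext_metric unfolding RFR_model_def by blast
lemma ext_metric_C: "ext_metric C dC"
  using model_C r_forest_ext_metric unfolding RFR_model_def by blast

lemma f_in: "a \<in> A \<Longrightarrow> f a \<in> B" and g_in: "a \<in> A \<Longrightarrow> g a \<in> C"
  using emb_f emb_g unfolding struct_embedding_def by blast+

lemma f_dist: "a \<in> A \<Longrightarrow> a' \<in> A \<Longrightarrow> dB (f a) (f a') = dA a a'"
  and g_dist: "a \<in> A \<Longrightarrow> a' \<in> A \<Longrightarrow> dC (g a) (g a') = dA a a'"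
  and f_R: "a \<in> A \<Longrightarrow> a' \<in> A \<Longrightarrow> RB (f a) (f a') = RA a a'"
  and g_R: "a \<in> A \<Longrightarrow> a' \<in> A \<Longrightarrow> RC (g a) (g a') = RA a a'"
  using emb_f emb_g unfolding struct_embedding_def by blast+

lemma inj_on_f: "inj_on f A"
  by (rule struct_embedding_inj_on[OF ext_metric_A emb_f ext_metric_B])

lemma inj_on_g: "inj_on g A"
  by (rule struct_embedding_inj_on[OF ext_metric_A emb_g ext_metric_C])

text \<open>Points of the amalgam are the classes of the disjoint union B + C modulo f a \<sim> g a;
  inB and inC send a point of B, resp. C, to its class.\<close>

definition inB :: "'d \<Rightarrow> ('d + 'e) set" where
  "inB b = insert (Inl b) {Inr (g a) | a. a \<in> A \<and> f a = b}"

definition inC :: "'e \<Rightarrow> ('d + 'e) set" where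
  "inC c = insert (Inr c) {Inl (f a) | a. a \<in> A \<and> g a = c}"

definition reprB :: "('d + 'e) set \<Rightarrow> 'd" where "reprB X = (THE b. Inl b \<in> X)"
definition reprC :: "('d + 'e) set \<Rightarrow> 'e" where "reprC X = (THE c. Inr c \<in> X)"

lemma reprB_inB [simp]: "reprB (inB b) = b"
  unfolding reprB_def inB_def by (rule the_equality) auto

lemma reprC_inC [simp]: "reprC (inC c) = c"
  unfolding reprC_def inC_def by (rule the_equality) auto

lemma inB_f_eq_inC_g: assumes "a \<in> A" shows "inB (f a) = inC (g a)"
proof -
  have "{Inr (g a') | a'. a' \<in> A \<and> f a' = f a} = {Inr (g a)}"
    using assms inj_on_f by (auto dest: inj_onD)
  moreover have "{Inl (f a') | a'. a' \<in> A \<and> g a' = g a} = {Inl (f a)}"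
    using assms inj_on_g by (auto dest: inj_onD)
  ultimately show ?thesis unfolding inB_def inC_def by auto
qed

lemma inB_eq_inC:
  assumes "inB b = inC c"
  obtains a where "a \<in> A" "b = f a" "c = g a"
proof -
  have "Inl b \<in> inC c" using assms unfolding inB_def by auto
  then show ?thesis using that unfolding inC_def by auto
qed

lemma inter_image: "inB ` B \<inter> inC ` C = (\<lambda>a. inB (f a)) ` A"
proof
  show "inB ` B \<inter> inC ` C \<subseteq> (\<lambda>a. inB (f a)) ` A"
  proof
    fix X assume "X \<in> inB ` B \<inter> inC ` C"
    then obtain b c where "X = inB b" "X = inC c" by blast
    then obtain a where "a \<in> A" "b = f a" using inB_eq_inC by metis
    then show "X \<in> (\<lambda>a. inB (f a)) ` A" using \<open>X = inB b\<close> by blast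
  qed
  show "(\<lambda>a. inB (f a)) ` A \<subseteq> inB ` B \<inter> inC ` C"
  proof
    fix X assume "X \<in> (\<lambda>a. inB (f a)) ` A"
    then obtain a where a: "a \<in> A" "X = inB (f a)" by blast
    then have "X \<in> inB ` B" "X \<in> inC ` C"
      using f_in[OF a(1)] g_in[OF a(1)] inB_f_eq_inC_g[OF a(1)] by auto
    then show "X \<in> inB ` B \<inter> inC ` C" by blast
  qed
qed

definition glued_dist :: "('d + 'e) set \<Rightarrow> ('d + 'e) set \<Rightarrow> ennreal" where
  "glued_dist X Y =
    (if X \<in> inB ` B \<and> Y \<in> inB ` B then dB (reprB X) (reprB Y)
     else if X \<in> inC ` C \<and> Y \<in> inC ` C then dC (reprC X) (reprC Y)
     else if X \<in> inB ` B then (INF a\<in>A. dB (reprB X) (f a) + dC (g a) (reprC Y))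
     else (INF a\<in>A. dC (reprC X) (g a) + dB (f a) (reprB Y)))"

definition glued_rel :: "('d + 'e) set \<Rightarrow> ('d + 'e) set \<Rightarrow> real" where
  "glued_rel X Y = (if X \<in> inB ` B \<and> Y \<in> inB ` B then RB (reprB X) (reprB Y) else RC (reprC X) (reprC Y))"

lemma glued_dist_inB: "b \<in> B \<Longrightarrow> b' \<in> B \<Longrightarrow> glued_dist (inB b) (inB b') = dB b b'"
  unfolding glued_dist_def by simp

lemma glued_rel_inB: "b \<in> B \<Longrightarrow> b' \<in> B \<Longrightarrow> glued_rel (inB b) (inB b') = RB b b'"
  unfolding glued_rel_def by simp

lemma inC_in_inB_image:
  assumes "inC c \<in> inB ` B"
  obtains a where "a \<in> A" "c = g a" "inC c = inB (f a)"
proof -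
  obtain b where "inB b = inC c" using assms by auto
  then obtain a where "a \<in> A" "c = g a" by (rule inB_eq_inC)
  then show ?thesis using that inB_f_eq_inC_g by simp
qed

lemma glued_dist_inC:
  assumes "c \<in> C" "c' \<in> C"
  shows "glued_dist (inC c) (inC c') = dC c c'"
proof (cases "inC c \<in> inB ` B \<and> inC c' \<in> inB ` B")
  case True
  then obtain a a' where "a \<in> A" "c = g a" "inC c = inB (f a)" "a' \<in> A" "c' = g a'" "inC c' = inB (f a')"
    using inC_in_inB_image by metis
  then show ?thesis using glued_dist_inB f_in f_dist g_dist by simp
next
  case False
  then show ?thesis using assms unfolding glued_dist_def by auto
qed

lemma glued_rel_inC:
  assumes "c \<in> C" "c' \<in> C"
  shows "glued_rel (inC c) (inC c') = RC c c'"
proof (cases "inC c \<in> inB ` B \<and> inC c' \<in> inB ` B")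
  case True
  then obtain a a' where "a \<in> A" "c = g a" "inC c = inB (f a)" "a' \<in> A" "c' = g a'" "inC c' = inB (f a')"
    using inC_in_inB_image by metis
  then show ?thesis using glued_rel_inB f_in f_R g_R by simp
next
  case False
  then show ?thesis unfolding glued_rel_def by auto
qed


lemma isometry_inB: "isometry_on B dB glued_dist inB"
  unfolding isometry_on_def by (simp add: glued_dist_inB)

lemma isometry_inC: "isometry_on C dC glued_dist inC"
  unfolding isometry_on_def by (simp add: glued_dist_inC)

lemma isometry_inB_f: "isometry_on A dA glued_dist (\<lambda>a. inB (f a))"
  unfolding isometry_on_def by (simp add: glued_dist_inB f_in f_dist)

lemma glued_dist_cross_BC:
  assumes X: "X \<in> inB ` B - inC ` C" and Y: "Y \<in> inC ` C - inB ` B"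
  shows "glued_dist X Y = (INF W\<in>inB ` B \<inter> inC ` C. glued_dist X W + glued_dist W Y)"
proof -
  obtain b c where bc: "b \<in> B" "X = inB b" "c \<in> C" "Y = inC c" using X Y by blast
  have "glued_dist X Y = (INF a\<in>A. dB b (f a) + dC (g a) c)" using X Y bc unfolding glued_dist_def by auto
  also have "\<dots> = (INF a\<in>A. glued_dist X (inB (f a)) + glued_dist (inB (f a)) Y)"
  proof (rule INF_cong[OF refl])
    fix a assume a: "a \<in> A"
    have "glued_dist X (inB (f a)) = dB b (f a)" using bc(1,2) f_in[OF a] by (simp add: glued_dist_inB)
    moreover have "glued_dist (inB (f a)) Y = dC (g a) c"
      using bc(3,4) g_in[OF a] inB_f_eq_inC_g[OF a] by (simp add: glued_dist_inC)
    ultimately show "dB b (f a) + dC (g a) c = glued_dist X (inB (f a)) + glued_dist (inB (f a)) Y" by simp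
  qed
  also have "\<dots> = (INF W\<in>inB ` B \<inter> inC ` C. glued_dist X W + glued_dist W Y)"
    unfolding inter_image by (simp add: image_image)
  finally show ?thesis .
qed

lemma glued_dist_cross_CB:
  assumes X: "X \<in> inC ` C - inB ` B" and Y: "Y \<in> inB ` B - inC ` C"
  shows "glued_dist X Y = (INF W\<in>inB ` B \<inter> inC ` C. glued_dist X W + glued_dist W Y)"
proof -
  obtain b c where bc: "c \<in> C" "X = inC c" "b \<in> B" "Y = inB b" using X Y by blast
  have "glued_dist X Y = (INF a\<in>A. dC c (g a) + dB (f a) b)" using X Y bc unfolding glued_dist_def by auto
  also have "\<dots> = (INF a\<in>A. glued_dist X (inB (f a)) + glued_dist (inB (f a)) Y)"
  proof (rule INF_cong[OF refl])
    fix a assume a: "a \<in> A"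
    have "glued_dist X (inB (f a)) = dC c (g a)"
      using bc(1,2) g_in[OF a] inB_f_eq_inC_g[OF a] by (simp add: glued_dist_inC)
    moreover have "glued_dist (inB (f a)) Y = dB (f a) b" using bc(3,4) f_in[OF a] by (simp add: glued_dist_inB)
    ultimately show "dC c (g a) + dB (f a) b = glued_dist X (inB (f a)) + glued_dist (inB (f a)) Y" by simp
  qed
  also have "\<dots> = (INF W\<in>inB ` B \<inter> inC ` C. glued_dist X W + glued_dist W Y)"
    unfolding inter_image by (simp add: image_image)
  finally show ?thesis .
qed

lemma forest_gluing: "forest_gluing (inB ` B) (inC ` C) glued_dist"
proof
  show "r_forest (inB ` B) glued_dist"
    using model_B r_forest_image[OF _ isometry_inB] unfolding RFR_model_def by blast
  show "r_forest (inC ` C) glued_dist"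
    using model_C r_forest_image[OF _ isometry_inC] unfolding RFR_model_def by blast
  show "r_forest (inB ` B \<inter> inC ` C) glued_dist"
    using model_A r_forest_image[OF _ isometry_inB_f] unfolding RFR_model_def inter_image by blast
qed (fact glued_dist_cross_BC, fact glued_dist_cross_CB)

lemma amalgam:
  "\<exists>(N::('d + 'e) set set) dN RN h k.
     RFR_model N dN RN \<and> struct_embedding B dB RB N dN RN h \<and>
     struct_embedding C dC RC N dN RN k \<and> (\<forall>a\<in>A. h (f a) = k (g a))"
proof -
  interpret glued: forest_gluing "inB ` B" "inC ` C" glued_dist by (rule forest_gluing)
  let ?R = "mcshane_ext (inB ` B \<times> inB ` B \<union> inC ` C \<times> inC ` C) glued_rel glued_dist"
  have lip_B: "lip_1_1 (inB ` B) glued_dist glued_rel"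
    using model_B lip_1_1_image[where R' = glued_rel, OF _ isometry_inB glued_rel_inB] unfolding RFR_model_def by blast
  have lip_C: "lip_1_1 (inC ` C) glued_dist glued_rel"
    using model_C lip_1_1_image[where R' = glued_rel, OF _ isometry_inC glued_rel_inC] unfolding RFR_model_def by blast
  note R = glued.lip_1_1_union_extension[OF lip_B lip_C]
  have "RFR_model (inB ` B \<union> inC ` C) glued_dist ?R"
    unfolding RFR_model_def using glued.r_forest_union R(1) by blast
  moreover have "struct_embedding B dB RB (inB ` B \<union> inC ` C) glued_dist ?R inB"
    unfolding struct_embedding_def using R(2) by (auto simp: glued_dist_inB glued_rel_inB)
  moreover have "struct_embedding C dC RC (inB ` B \<union> inC ` C) glued_dist ?R inC"
    unfolding struct_embedding_def using R(2) by (auto simp: glued_dist_inC glued_rel_inC)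
  moreover have "\<forall>a\<in>A. inB (f a) = inC (g a)" using inB_f_eq_inC_g by blast
  ultimately show ?thesis by blast
qed

end

theorem RFR_amalgamation_property:
  fixes A :: "'c set" and B :: "'d set" and C :: "'e set"
  assumes "RFR_model A dA RA" "RFR_model B dB RB" "RFR_model C dC RC"
    and "struct_embedding A dA RA B dB RB f" "struct_embedding A dA RA C dC RC g"
  shows "\<exists>(N::('d + 'e) set set) dN RN h k.
     RFR_model N dN RN \<and> struct_embedding B dB RB N dN RN h \<and>
     struct_embedding C dC RC N dN RN k \<and> (\<forall>a\<in>A. h (f a) = k (g a))"
  by (rule RFR_amalgamation.amalgam[OF RFR_amalgamation.intro[OF assms]])

theorem RFR_joint_embedding_property:
  fixes S1 :: "'a set" and S2 :: "'b set"
  assumes "RFR_model S1 d1 R1" "RFR_model S2 d2 R2"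
  shows "\<exists>(N::('a + 'b) set set) dN RN f g.
     RFR_model N dN RN \<and> struct_embedding S1 d1 R1 N dN RN f \<and> struct_embedding S2 d2 R2 N dN RN g"
  using RFR_amalgamation_property[where f = "\<lambda>_::unit. undefined" and g = "\<lambda>_::unit. undefined",
      OF RFR_model_empty assms struct_embedding_empty struct_embedding_empty]
  by (elim exE conjE) (intro exI conjI)

theorem proposition2p20:
  shows
   "(\<forall>(S1::'a set) d1 R1 (S2::'b set) d2 R2.
       RFR_model S1 d1 R1 \<and> RFR_model S2 d2 R2 \<longrightarrow>
       (\<exists>(N::('a + 'b) set set) dN RN f g.
          RFR_model N dN RN \<and>
          struct_embedding S1 d1 R1 N dN RN f \<and>
          struct_embedding S2 d2 R2 N dN RN g))
    \<and>
    (\<forall>(A::'c set) dA RA (B::'d set) dB RB (C::'e set) dC RC f g.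
       RFR_model A dA RA \<and> RFR_model B dB RB \<and> RFR_model C dC RC \<and>
       struct_embedding A dA RA B dB RB f \<and> struct_embedding A dA RA C dC RC g \<longrightarrow>
       (\<exists>(N::('d + 'e) set set) dN RN h k.
          RFR_model N dN RN \<and>
          struct_embedding B dB RB N dN RN h \<and>
          struct_embedding C dC RC N dN RN k \<and>
          (\<forall>a\<in>A. h (f a) = k (g a))))"
proof (intro conjI allI impI; elim conjE)
  fix S1 :: "'a set" and d1 R1 and S2 :: "'b set" and d2 R2
  assume "RFR_model S1 d1 R1" "RFR_model S2 d2 R2"
  then show "\<exists>(N::('a + 'b) set set) dN RN f g.
      RFR_model N dN RN \<and> struct_embedding S1 d1 R1 N dN RN f \<and> struct_embedding S2 d2 R2 N dN RN g"
    by (rule RFR_joint_embedding_property)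
next
  fix A :: "'c set" and dA RA and B :: "'d set" and dB RB and C :: "'e set" and dC RC and f g
  assume "RFR_model A dA RA" "RFR_model B dB RB" "RFR_model C dC RC"
    "struct_embedding A dA RA B dB RB f" "struct_embedding A dA RA C dC RC g"
  then show "\<exists>(N::('d + 'e) set set) dN RN h k.
      RFR_model N dN RN \<and> struct_embedding B dB RB N dN RN h \<and>
      struct_embedding C dC RC N dN RN k \<and> (\<forall>a\<in>A. h (f a) = k (g a))"
    by (rule RFR_amalgamation_property)
qed

end
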